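(* Let $r\ge1$. The assignment \[ (i)\mapsto e_i,\qquad (i-1|i)\mapsto c_i^{\leftarrow},\qquad (i+1|i)\mapsto c_{i+1}^{\rightarrow},\qquad \theta\mapsto \omega \] defines an isomorphism of $\mathbb Z\times\mathbb Z^2$-graded algebras $\mathcal A^!_r\cong T_1^{\lambda,r}$. Moreover it induces isomorphisms of dg-algebras $(\mathcal A^!_r,0)\cong(T_1^{\lambda,r},0)$ and $(\mathcal A^!_r,d)\cong(T_1^{\lambda,r},d_1)$.
   Context: $\Bbbk$ is a field. $\mathcal Q_r$ is the quiver with vertices $0,1,\dots,r$, arrows $i|i+1:i\to i+1$ and $i+1|i:i+1\to i$ for $0\le i<r$, and a loop $\theta$ at $0$; $(i_1|\cdots|i_n)$ denotes the path through $i_1,\dots,i_n$ and $(i)$ the constant path. $\mathcal A^!_r$ is the quotient of the path algebra $\Bbbk\mathcal Q_r$ by $(i|i-1|i)=(i|i+1|i)$ for $0<i<r$, $\theta(0|1|0)=(0|1|0)\theta$, $\theta^2=0$; it is graded by (homological, $q$, $\lambda$)-degrees $\deg(i|i\pm1)=(0,1,0)$, $\deg\theta=(1,0,2)$. The differential $d$ on $\mathcal A^!_r$ is $d(\theta)=(0|1|0)$ and $d=0$ on the other generators. $T_1^{\lambda,r}$ is the dg-enhanced KLRW algebra with one black strand and $r$ red strands labelled $1$: braid-like diagrams (bottom to top; product = stacking) with a leftmost vertical blue strand $\lambda$, $r$ non-crossing red strands and one black strand which may cross red strands, carry dots, and, when it is immediately right of the blue strand, be nailed on the blue strand (nail: homological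 degree $1$), subject to: dots slide through black/red crossings; a black/red double crossing equals one dot on the black strand; a nailed strand's dot can slide through the nail; two consecutive nails on the strand give $0$. $(q,\lambda)$-degrees: dot $(2,0)$, black/red crossing $(1,0)$, nail $(0,2)$. The differential $d_1$ sends the nail to a dot and is zero on nail-free diagrams (graded Leibniz rule). In $T_1^{\lambda,r}$: $e_i$ is the idempotent with the black strand immediately right of the $i$-th red strand ($i=0$: immediately right of blue); $c_i^{\leftarrow}$ ($1\le i\le r$) is the diagram in which the black strand starts (bottom) right of the $i$-th red strand and ends (top) left of it, crossing it once; $c_{i+1}^{\rightarrow}$ ($0\le i<r$) is the diagram in which the black strand starts right of the $i$-th red strand and ends right of the $(i+1)$-th, crossing it once; $\omega$ is the nail on the black strand in idempotent $e_0$. *)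

theory Defs
  imports Main
begin

text \<open>A path is a pair (v, as) of a starting vertex v and a list of composable
arrows as = [a1,...,an] (s a1 = v, t ak = s a(k+1)); (v,[]) is the constant path (v).
Elements of the path algebra kQ are finitely supported functions from valid paths to
the field; the product is concatenation of paths: (v,as)(w,bs) = (v, as @ bs) if the
end of the first path is w, and 0 otherwise.\<close>

type_synonym 'e path = "nat \<times> 'e list"

fun is_chain :: "('e \<Rightarrow> nat) \<Rightarrow> ('e \<Rightarrow> nat) \<Rightarrow> nat \<Rightarrow> 'e list \<Rightarrow> bool" where
  "is_chain s t v [] = True"
| "is_chain s t v (a # as) = (s a = v \<and> is_chain s t (t a) as)"

fun pend :: "('e \<Rightarrow> nat) \<Rightarrow> nat \<Rightarrow> 'e list \<Rightarrow> nat" where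
  "pend t v [] = v"
| "pend t v (a # as) = pend t (t a) as"

definition valid_path ::
  "nat set \<Rightarrow> 'e set \<Rightarrow> ('e \<Rightarrow> nat) \<Rightarrow> ('e \<Rightarrow> nat) \<Rightarrow> 'e path \<Rightarrow> bool" where
  "valid_path V E s t p = (fst p \<in> V \<and> set (snd p) \<subseteq> E \<and> is_chain s t (fst p) (snd p))"

definition path_alg ::
  "nat set \<Rightarrow> 'e set \<Rightarrow> ('e \<Rightarrow> nat) \<Rightarrow> ('e \<Rightarrow> nat) \<Rightarrow> ('e path \<Rightarrow> 'k::field) set" where
  "path_alg V E s t = {f. finite {p. f p \<noteq> 0} \<and> (\<forall>p. f p \<noteq> 0 \<longrightarrow> valid_path V E s t p)}"

definition pth :: "'e path \<Rightarrow> ('e path \<Rightarrow> 'k::field)" where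
  "pth p = (\<lambda>q. if q = p then 1 else 0)"

definition padd :: "('e path \<Rightarrow> 'k::field) \<Rightarrow> ('e path \<Rightarrow> 'k) \<Rightarrow> ('e path \<Rightarrow> 'k)" where
  "padd f g = (\<lambda>p. f p + g p)"

definition pdiff :: "('e path \<Rightarrow> 'k::field) \<Rightarrow> ('e path \<Rightarrow> 'k) \<Rightarrow> ('e path \<Rightarrow> 'k)" where
  "pdiff f g = (\<lambda>p. f p - g p)"

definition psmult :: "'k::field \<Rightarrow> ('e path \<Rightarrow> 'k) \<Rightarrow> ('e path \<Rightarrow> 'k)" where
  "psmult c f = (\<lambda>p. c * f p)"

definition pmul :: "('e \<Rightarrow> nat) \<Rightarrow> ('e path \<Rightarrow> 'k::field) \<Rightarrow> ('e path \<Rightarrow> 'k) \<Rightarrow> ('e path \<Rightarrow> 'k)" where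
  "pmul t f g = (\<lambda>(v, as). \<Sum>k\<in>{0..length as}.
       f (v, take k as) * g (pend t v (take k as), drop k as))"

definition pone :: "nat set \<Rightarrow> ('e path \<Rightarrow> 'k::field)" where
  "pone V = (\<lambda>p. if snd p = [] \<and> fst p \<in> V then 1 else 0)"

inductive_set gen_ideal ::
  "nat set \<Rightarrow> 'e set \<Rightarrow> ('e \<Rightarrow> nat) \<Rightarrow> ('e \<Rightarrow> nat) \<Rightarrow> ('e path \<Rightarrow> 'k::field) set
     \<Rightarrow> ('e path \<Rightarrow> 'k) set"
  for V E s t R where
  gi_zero: "(\<lambda>_. 0) \<in> gen_ideal V E s t R"
| gi_gen: "x \<in> R \<Longrightarrow> x \<in> gen_ideal V E s t R"
| gi_add: "x \<in> gen_ideal V E s t R \<Longrightarrow> y \<in> gen_ideal V E s t R \<Longrightarrow> padd x y \<in> gen_ideal V E s t R"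
| gi_mult: "x \<in> gen_ideal V E s t R \<Longrightarrow> a \<in> path_alg V E s t \<Longrightarrow> b \<in> path_alg V E s t \<Longrightarrow>
     pmul t (pmul t a x) b \<in> gen_ideal V E s t R"

definition pmap :: "('e \<Rightarrow> 'f) \<Rightarrow> ('e path \<Rightarrow> 'k::field) \<Rightarrow> ('f path \<Rightarrow> 'k)" where
  "pmap \<psi> f = (\<lambda>(w, bs). \<Sum>p\<in>{p. f p \<noteq> 0 \<and> fst p = w \<and> map \<psi> (snd p) = bs}. f p)"

text \<open>Derivation of kQ (graded Leibniz rule with respect to the homological degree h)
determined by its values \<delta> on arrows:
d(a1\<cdot>\<cdot>\<cdot>an) = \<Sum>k (-1)^(h a1 + ... + h a(k-1)) a1\<cdot>\<cdot>\<cdot>a(k-1) d(ak) a(k+1)\<cdot>\<cdot>\<cdot>an.\<close>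
definition dpath :: "('e \<Rightarrow> nat) \<Rightarrow> ('e \<Rightarrow> int) \<Rightarrow> ('e \<Rightarrow> ('e path \<Rightarrow> 'k::field))
     \<Rightarrow> 'e path \<Rightarrow> ('e path \<Rightarrow> 'k)" where
  "dpath t h \<delta> p = (\<lambda>q. \<Sum>k<length (snd p).
      (if even (\<Sum>a\<leftarrow>take k (snd p). h a) then 1 else -1) *
      pmul t (pmul t (pth (fst p, take k (snd p))) (\<delta> (snd p ! k)))
        (pth (pend t (fst p) (take (Suc k) (snd p)), drop (Suc k) (snd p))) q)"

definition path_diff :: "('e \<Rightarrow> nat) \<Rightarrow> ('e \<Rightarrow> int) \<Rightarrow> ('e \<Rightarrow> ('e path \<Rightarrow> 'k::field))
     \<Rightarrow> ('e path \<Rightarrow> 'k) \<Rightarrow> ('e path \<Rightarrow> 'k)" where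
  "path_diff t h \<delta> f = (\<lambda>q. \<Sum>p\<in>{p. f p \<noteq> 0}. f p * dpath t h \<delta> p q)"

text \<open>Arrows of Q_r: Edge i j is the arrow (i|j), Theta the loop at 0.\<close>
datatype arrA = Edge nat nat | Theta

definition vertsA :: "nat \<Rightarrow> nat set" where "vertsA r = {0..r}"

definition arrowsA :: "nat \<Rightarrow> arrA set" where
  "arrowsA r = {Edge i (i+1) | i. i < r} \<union> {Edge (i+1) i | i. i < r} \<union> {Theta}"

fun srcA :: "arrA \<Rightarrow> nat" where "srcA (Edge i j) = i" | "srcA Theta = 0"
fun tgtA :: "arrA \<Rightarrow> nat" where "tgtA (Edge i j) = j" | "tgtA Theta = 0"

text \<open>(homological, q, lambda)-degree.\<close>
fun degA :: "arrA \<Rightarrow> int \<times> int \<times> int" where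
  "degA (Edge i j) = (0, 1, 0)" | "degA Theta = (1, 0, 2)"

definition relsA :: "nat \<Rightarrow> (arrA path \<Rightarrow> 'k::field) set" where
  "relsA r =
     {pdiff (pth (i, [Edge i (i-1), Edge (i-1) i])) (pth (i, [Edge i (i+1), Edge (i+1) i])) | i. 0 < i \<and> i < r}
   \<union> {pdiff (pth (0, [Theta, Edge 0 1, Edge 1 0])) (pth (0, [Edge 0 1, Edge 1 0, Theta]))}
   \<union> {pth (0, [Theta, Theta])}"

definition algA :: "nat \<Rightarrow> (arrA path \<Rightarrow> 'k::field) set" where
  "algA r = path_alg (vertsA r) (arrowsA r) srcA tgtA"

definition idealA :: "nat \<Rightarrow> (arrA path \<Rightarrow> 'k::field) set" where
  "idealA r = gen_ideal (vertsA r) (arrowsA r) srcA tgtA (relsA r)"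

fun deltaA :: "arrA \<Rightarrow> (arrA path \<Rightarrow> 'k::field)" where
  "deltaA Theta = pth (0, [Edge 0 1, Edge 1 0])"
| "deltaA (Edge i j) = (\<lambda>_. 0)"

definition dA :: "(arrA path \<Rightarrow> 'k::field) \<Rightarrow> (arrA path \<Rightarrow> 'k)" where
  "dA = path_diff tgtA (\<lambda>a. fst (degA a)) deltaA"

text \<open>A diagram with one black strand is a sequence (read from top to bottom) of
elementary pieces on the black strand: CrossL i = c_i^{\<leftarrow>} (black crosses the i-th red
strand, bottom right of it, top left of it), CrossR i = c_i^{\<rightarrow>} (bottom left of the
i-th red strand, top right of it), Dot i (a dot while in position e_i), Nail (the nail,
in position e_0).  Position i means: immediately right of the i-th red strand
(0 = immediately right of the blue strand).  We encode a piece as an arrow from its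
top position to its bottom position, so that the path [x1,...,xn] is the stacked
diagram x1 on top of x2 on top of ... on top of xn, i.e. the product x1 x2 ... xn
(product = stacking, a b = a on top of b).  Constant paths (i) are the idempotents
e_i.  Since there is a single black strand, planar isotopy classes of such diagrams
are exactly these paths.\<close>
datatype arrT = CrossL nat | CrossR nat | Dot nat | Nail

definition vertsT :: "nat \<Rightarrow> nat set" where "vertsT r = {0..r}"

definition arrowsT :: "nat \<Rightarrow> arrT set" where
  "arrowsT r = {CrossL i | i. 1 \<le> i \<and> i \<le> r} \<union> {CrossR i | i. 1 \<le> i \<and> i \<le> r}
     \<union> {Dot i | i. i \<le> r} \<union> {Nail}"

fun srcT :: "arrT \<Rightarrow> nat" where
  "srcT (CrossL i) = i - 1" | "srcT (CrossR i) = i" | "srcT (Dot i) = i" | "srcT Nail = 0"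
fun tgtT :: "arrT \<Rightarrow> nat" where
  "tgtT (CrossL i) = i" | "tgtT (CrossR i) = i - 1" | "tgtT (Dot i) = i" | "tgtT Nail = 0"

text \<open>(homological, q, lambda)-degree.\<close>
fun degT :: "arrT \<Rightarrow> int \<times> int \<times> int" where
  "degT (CrossL i) = (0, 1, 0)" | "degT (CrossR i) = (0, 1, 0)"
| "degT (Dot i) = (0, 2, 0)" | "degT Nail = (1, 0, 2)"

text \<open>Local relations: dots slide through black/red crossings; a black/red double
crossing equals a dot; the dot slides through the nail; two nails give 0.\<close>
definition relsT :: "nat \<Rightarrow> (arrT path \<Rightarrow> 'k::field) set" where
  "relsT r =
     {pdiff (pth (i-1, [Dot (i-1), CrossL i])) (pth (i-1, [CrossL i, Dot i])) | i. 1 \<le> i \<and> i \<le> r}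
   \<union> {pdiff (pth (i, [Dot i, CrossR i])) (pth (i, [CrossR i, Dot (i-1)])) | i. 1 \<le> i \<and> i \<le> r}
   \<union> {pdiff (pth (i, [CrossR i, CrossL i])) (pth (i, [Dot i])) | i. 1 \<le> i \<and> i \<le> r}
   \<union> {pdiff (pth (i-1, [CrossL i, CrossR i])) (pth (i-1, [Dot (i-1)])) | i. 1 \<le> i \<and> i \<le> r}
   \<union> {pdiff (pth (0, [Nail, Dot 0])) (pth (0, [Dot 0, Nail]))}
   \<union> {pth (0, [Nail, Nail])}"

definition algT :: "nat \<Rightarrow> (arrT path \<Rightarrow> 'k::field) set" where
  "algT r = path_alg (vertsT r) (arrowsT r) srcT tgtT"

definition idealT :: "nat \<Rightarrow> (arrT path \<Rightarrow> 'k::field) set" where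
  "idealT r = gen_ideal (vertsT r) (arrowsT r) srcT tgtT (relsT r)"

fun deltaT :: "arrT \<Rightarrow> (arrT path \<Rightarrow> 'k::field)" where
  "deltaT Nail = pth (0, [Dot 0])"
| "deltaT (CrossL i) = (\<lambda>_. 0)" | "deltaT (CrossR i) = (\<lambda>_. 0)" | "deltaT (Dot i) = (\<lambda>_. 0)"

definition dT :: "(arrT path \<Rightarrow> 'k::field) \<Rightarrow> (arrT path \<Rightarrow> 'k)" where
  "dT = path_diff tgtT (\<lambda>a. fst (degT a)) deltaT"

fun assign :: "arrA \<Rightarrow> arrT" where
  "assign (Edge i j) = (if j = i + 1 then CrossL j else CrossR i)"
| "assign Theta = Nail"

end

theory Submission
  imports Defs "HOL-Library.Function_Algebras"
begin

text \<open>The assignment extends to the substitution \<Phi> of path algebras that replaces each arrow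
by the corresponding one-arrow diagram. In the other direction, let \<Psi> replace the crossings
by the corresponding edges, the nail by \<theta>, and the dot in position i by the loop
(i|i-1|i), resp. (0|1|0) for i = 0. Both substitutions are algebra maps which send
defining relations into the other ideal: the relation (i|i-1|i) = (i|i+1|i) of A becomes
the difference of two double crossings, each equal to the dot, and the relations of T become
consequences of the relations of A. Since \<Psi> \<circ> \<Phi> is the identity and \<Phi> \<circ> \<Psi> replaces every
dot by a double crossing, \<Phi> induces an isomorphism of the quotients. Both differentials are
derivations determined by their values on arrows, so compatibility has only to be checked
on \<theta>, where \<Phi> (d \<theta>) = c_1^\<leftarrow> c_1^\<rightarrow> is the dot d_1 \<omega> modulo the relations.\<close>

section \<open>Finitely supported functions\<close>

abbreviation supp :: "('a \<Rightarrow> 'k::field) \<Rightarrow> 'a set" where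
  "supp f \<equiv> {p. f p \<noteq> 0}"

abbreviation fin_supp :: "('a \<Rightarrow> 'k::field) \<Rightarrow> bool" where
  "fin_supp f \<equiv> finite (supp f)"

lemma sum_fun_apply: "(sum F A) x = (\<Sum>i\<in>A. F i x)"
  by (induction A rule: infinite_finite_induct) auto

lemma const_zero_eq_zero: "(\<lambda>_. 0) = 0"
  by (simp add: fun_eq_iff)

lemma padd_eq_plus: "padd f g = f + g"
  by (simp add: padd_def fun_eq_iff)

lemma pdiff_eq_minus: "pdiff f g = f - g"
  by (simp add: pdiff_def fun_eq_iff)

lemma fin_supp_add: "fin_supp f \<Longrightarrow> fin_supp g \<Longrightarrow> fin_supp (f + g)"
  by (rule finite_subset[of _ "supp f \<union> supp g"]) auto

lemma fin_supp_psmult: "fin_supp f \<Longrightarrow> fin_supp (psmult c f)"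
  by (rule finite_subset[of _ "supp f"]) (auto simp: psmult_def)

lemma fin_supp_pth: "fin_supp (pth p :: _ \<Rightarrow> 'k::field)"
  by (rule finite_subset[of _ "{p}"]) (auto simp: pth_def)

lemma fin_supp_sum:
  "finite A \<Longrightarrow> (\<And>i. i \<in> A \<Longrightarrow> fin_supp (F i)) \<Longrightarrow> fin_supp (sum F A :: 'a \<Rightarrow> 'k::field)"
proof (induction A rule: finite_induct)
  case (insert a A)
  then show ?case using fin_supp_add[of "F a" "sum F A"] by simp
qed simp

lemma fin_supp_diff: "fin_supp f \<Longrightarrow> fin_supp g \<Longrightarrow> fin_supp (f - g)"
  by (rule finite_subset[of _ "supp f \<union> supp g"]) auto

lemma psmult_diff: "psmult c (f - g) = psmult c f - psmult c g"
  by (simp add: psmult_def fun_eq_iff algebra_simps)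

lemma psmult_zero_left: "psmult 0 f = 0"
  by (simp add: psmult_def fun_eq_iff)

lemma psmult_minus_one: "psmult (-1) f = - f"
  by (simp add: psmult_def fun_eq_iff)

lemma fin_supp_eq_sum_pth: "fin_supp f \<Longrightarrow> f = (\<Sum>p\<in>supp f. psmult (f p) (pth p))"
proof (rule ext)
  fix q assume "fin_supp f"
  have "(\<Sum>p\<in>supp f. psmult (f p) (pth p)) q = (\<Sum>p\<in>supp f. if q = p then f p else 0)"
    by (simp add: sum_fun_apply psmult_def pth_def, intro sum.cong) auto
  also have "\<dots> = f q" using \<open>fin_supp f\<close> by (simp add: sum.delta)
  finally show "f q = (\<Sum>p\<in>supp f. psmult (f p) (pth p)) q" by simp
qed

text \<open>Linearity is only required on finitely supported arguments: on the others the sums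
defining the maps below range over infinite sets and are junk.\<close>

definition fs_linear :: "(('e path \<Rightarrow> 'k::field) \<Rightarrow> ('f path \<Rightarrow> 'k)) \<Rightarrow> bool" where
  "fs_linear L \<longleftrightarrow> (\<forall>x y. fin_supp x \<longrightarrow> fin_supp y \<longrightarrow> L (x + y) = L x + L y)
     \<and> (\<forall>c x. fin_supp x \<longrightarrow> L (psmult c x) = psmult c (L x))"

lemma fs_linearI:
  "(\<And>x y. fin_supp x \<Longrightarrow> fin_supp y \<Longrightarrow> L (x + y) = L x + L y) \<Longrightarrow>
   (\<And>c x. fin_supp x \<Longrightarrow> L (psmult c x) = psmult c (L x)) \<Longrightarrow> fs_linear L"
  unfolding fs_linear_def by blast

lemma fs_linear_add: "fs_linear L \<Longrightarrow> fin_supp x \<Longrightarrow> fin_supp y \<Longrightarrow> L (x + y) = L x + L y"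
  unfolding fs_linear_def by blast

lemma fs_linear_psmult: "fs_linear L \<Longrightarrow> fin_supp x \<Longrightarrow> L (psmult c x) = psmult c (L x)"
  unfolding fs_linear_def by blast

lemma fs_linear_zero: "fs_linear L \<Longrightarrow> L 0 = 0"
proof -
  assume "fs_linear L"
  then have "L (psmult 0 0) = psmult 0 (L 0)" unfolding fs_linear_def by auto
  then show ?thesis by (metis psmult_zero_left)
qed

lemma fs_linear_sum:
  assumes "fs_linear L" "finite A" "\<And>i. i \<in> A \<Longrightarrow> fin_supp (F i)"
  shows "L (sum F A) = (\<Sum>i\<in>A. L (F i))"
  using assms(2,3)
proof (induction A rule: finite_induct)
  case empty
  then show ?case using fs_linear_zero[OF assms(1)] by (metis sum.empty)
next
  case (insert a A)
  then have "L (sum F (insert a A)) = L (F a + sum F A)" by simp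
  also have "\<dots> = L (F a) + L (sum F A)"
    using insert fin_supp_sum[of A F] fs_linear_add[OF assms(1)] by simp
  also have "\<dots> = (\<Sum>i\<in>insert a A. L (F i))"
    using insert by (simp add: sum.insert[OF insert.hyps, of "\<lambda>i. L (F i)"])
  finally show ?case .
qed

lemma fs_linear_diff: "fs_linear L \<Longrightarrow> fin_supp x \<Longrightarrow> fin_supp y \<Longrightarrow> L (x - y) = L x - L y"
  using fs_linear_add[of L x "psmult (-1) y"] fs_linear_psmult[of L y "-1"]
  by (simp add: fin_supp_psmult psmult_minus_one)

lemma fs_linear_comp:
  fixes L1 :: "('f path \<Rightarrow> 'k::field) \<Rightarrow> ('g path \<Rightarrow> 'k)" and L2 :: "('e path \<Rightarrow> 'k) \<Rightarrow> ('f path \<Rightarrow> 'k)"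
  assumes "fs_linear L1" "fs_linear L2" "\<And>x. fin_supp x \<Longrightarrow> fin_supp (L2 x)"
  shows "fs_linear (\<lambda>x. L1 (L2 x))"
proof (rule fs_linearI)
  fix x y :: "'e path \<Rightarrow> 'k" assume "fin_supp x" "fin_supp y"
  then show "L1 (L2 (x + y)) = L1 (L2 x) + L1 (L2 y)"
    using assms fs_linear_add[of L2 x y] fs_linear_add[of L1 "L2 x" "L2 y"] by simp
next
  fix c and x :: "'e path \<Rightarrow> 'k" assume "fin_supp x"
  then show "L1 (L2 (psmult c x)) = psmult c (L1 (L2 x))"
    using assms fs_linear_psmult[of L2 x c] fs_linear_psmult[of L1 "L2 x" c] by simp
qed

lemma fs_linear_minus:
  fixes L1 L2 :: "('e path \<Rightarrow> 'k::field) \<Rightarrow> ('f path \<Rightarrow> 'k)"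
  assumes "fs_linear L1" "fs_linear L2"
  shows "fs_linear (\<lambda>x. L1 x - L2 x)"
proof (rule fs_linearI)
  fix x y :: "'e path \<Rightarrow> 'k" assume "fin_supp x" "fin_supp y"
  then show "L1 (x + y) - L2 (x + y) = (L1 x - L2 x) + (L1 y - L2 y)"
    using assms fs_linear_add[of L1 x y] fs_linear_add[of L2 x y] by simp
next
  fix c and x :: "'e path \<Rightarrow> 'k" assume "fin_supp x"
  then show "L1 (psmult c x) - L2 (psmult c x) = psmult c (L1 x - L2 x)"
    using assms fs_linear_psmult[of L1 x c] fs_linear_psmult[of L2 x c] by (simp add: psmult_diff)
qed

lemma fs_linear_id: "fs_linear (\<lambda>x. x)"
  unfolding fs_linear_def by simp

lemma fs_linear_sum_pth:
  "fs_linear L \<Longrightarrow> fin_supp x \<Longrightarrow> L x = (\<Sum>p\<in>supp x. psmult (x p) (L (pth p)))"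
  by (subst fin_supp_eq_sum_pth, assumption)
     (simp add: fs_linear_sum fs_linear_psmult fin_supp_psmult fin_supp_pth)

lemma fs_linear_eqI:
  assumes "fs_linear L1" "fs_linear L2" "fin_supp x" "\<And>p. x p \<noteq> 0 \<Longrightarrow> L1 (pth p) = L2 (pth p)"
  shows "L1 x = L2 x"
  using assms by (simp add: fs_linear_sum_pth)

definition lin_subspace :: "('e path \<Rightarrow> 'k::field) set \<Rightarrow> bool" where
  "lin_subspace I \<longleftrightarrow> 0 \<in> I \<and> (\<forall>x\<in>I. \<forall>y\<in>I. x + y \<in> I) \<and> (\<forall>c. \<forall>x\<in>I. psmult c x \<in> I)"

lemma lin_subspace_sum: "lin_subspace I \<Longrightarrow> (\<And>i. i \<in> A \<Longrightarrow> F i \<in> I) \<Longrightarrow> sum F A \<in> I"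
  by (induction A rule: infinite_finite_induct) (auto simp: lin_subspace_def)

lemma lin_subspace_uminus: "lin_subspace I \<Longrightarrow> x \<in> I \<Longrightarrow> - x \<in> I"
  by (metis psmult_minus_one lin_subspace_def)

lemma lin_subspace_diff: "lin_subspace I \<Longrightarrow> x \<in> I \<Longrightarrow> y \<in> I \<Longrightarrow> x - y \<in> I"
  using lin_subspace_uminus[of I y] by (auto simp: lin_subspace_def)

lemma fs_linear_mem_subspace:
  assumes "fs_linear L" "lin_subspace I" "fin_supp x" "\<And>p. x p \<noteq> 0 \<Longrightarrow> L (pth p) \<in> I"
  shows "L x \<in> I"
  unfolding fs_linear_sum_pth[OF assms(1,3)]
  using assms(2,4) by (intro lin_subspace_sum) (auto simp: lin_subspace_def)

section \<open>Path algebras\<close>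

lemma pend_append [simp]: "pend t v (as @ bs) = pend t (pend t v as) bs"
  by (induction as arbitrary: v) auto

lemma pend_eq_last: "pend t v as = (if as = [] then v else t (last as))"
  by (induction as arbitrary: v) auto

lemma is_chain_append [simp]:
  "is_chain s t v (as @ bs) \<longleftrightarrow> is_chain s t v as \<and> is_chain s t (pend t v as) bs"
  by (induction as arbitrary: v) auto

lemma pend_map: "(\<And>a. a \<in> set as \<Longrightarrow> t' (f a) = t a) \<Longrightarrow> pend t' v (map f as) = pend t v as"
  by (induction as arbitrary: v) auto

lemma sum_eq_single:
  "finite A \<Longrightarrow> (\<And>k. k \<in> A \<Longrightarrow> k \<noteq> m \<Longrightarrow> T k = 0) \<Longrightarrow> sum T A = (if m \<in> A then T m else 0)"
proof -
  assume "finite A" "\<And>k. k \<in> A \<Longrightarrow> k \<noteq> m \<Longrightarrow> T k = 0"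
  then have "sum T A = (\<Sum>k\<in>A. if k = m then T k else 0)" by (intro sum.cong) auto
  then show ?thesis using \<open>finite A\<close> by simp
qed

lemma pmul_add_left: "pmul t (f + g) h = pmul t f h + pmul t g h"
  by (simp add: pmul_def fun_eq_iff algebra_simps sum.distrib split: prod.split)

lemma pmul_add_right: "pmul t h (f + g) = pmul t h f + pmul t h g"
  by (simp add: pmul_def fun_eq_iff algebra_simps sum.distrib split: prod.split)

lemma pmul_diff_left: "pmul t (f - g) h = pmul t f h - pmul t g h"
  by (simp add: pmul_def fun_eq_iff algebra_simps sum_subtractf split: prod.split)

lemma pmul_diff_right: "pmul t h (f - g) = pmul t h f - pmul t h g"
  by (simp add: pmul_def fun_eq_iff algebra_simps sum_subtractf split: prod.split)

lemma pmul_psmult_left: "pmul t (psmult c f) h = psmult c (pmul t f h)"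
  by (simp add: pmul_def psmult_def fun_eq_iff algebra_simps sum_distrib_left split: prod.split)

lemma pmul_psmult_right: "pmul t h (psmult c f) = psmult c (pmul t h f)"
  by (simp add: pmul_def psmult_def fun_eq_iff algebra_simps sum_distrib_left split: prod.split)

lemma fs_linear_pmul_left: "fs_linear (\<lambda>x. pmul t x y)"
  by (simp add: fs_linear_def pmul_add_left pmul_psmult_left)

lemma fs_linear_pmul_right: "fs_linear (\<lambda>y. pmul t x y)"
  by (simp add: fs_linear_def pmul_add_right pmul_psmult_right)

lemma pmul_pth:
  "pmul t (pth p) (pth q) = (if pend t (fst p) (snd p) = fst q then pth (fst p, snd p @ snd q) else 0)"
proof (rule ext, clarify)
  fix u cs
  obtain v as where p: "p = (v, as)" by force
  obtain w bs where q: "q = (w, bs)" by force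
  let ?T = "\<lambda>k. pth p (u, take k cs) * pth q (pend t u (take k cs), drop k cs)"
  have "pmul t (pth p) (pth q) (u, cs) = (\<Sum>k\<in>{0..length cs}. ?T k)"
    by (simp add: pmul_def)
  also have "\<dots> = (if length as \<in> {0..length cs} then ?T (length as) else 0)"
    by (rule sum_eq_single) (auto simp: pth_def p)
  also have "\<dots> = (if pend t (fst p) (snd p) = fst q then pth (fst p, snd p @ snd q) else 0) (u, cs)"
    by (auto simp: pth_def p q append_eq_conv_conj) (metis append_take_drop_id)
  finally show "pmul t (pth p) (pth q) (u, cs) =
      (if pend t (fst p) (snd p) = fst q then pth (fst p, snd p @ snd q) else 0) (u, cs)" .
qed

lemma pmul_nonzero_split:
  "pmul t f g (v, as) \<noteq> 0 \<Longrightarrow>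
   \<exists>k\<le>length as. f (v, take k as) \<noteq> 0 \<and> g (pend t v (take k as), drop k as) \<noteq> 0"
  unfolding pmul_def by (auto elim!: sum.not_neutral_contains_not_neutral)

lemma fin_supp_pmul:
  assumes "fin_supp f" "fin_supp g"
  shows "fin_supp (pmul t f g)"
proof (rule finite_subset)
  show "supp (pmul t f g) \<subseteq> (\<lambda>(p, q). (fst p, snd p @ snd q)) ` (supp f \<times> supp g)"
  proof clarify
    fix v as assume "pmul t f g (v, as) \<noteq> 0"
    then obtain k where "f (v, take k as) \<noteq> 0" "g (pend t v (take k as), drop k as) \<noteq> 0"
      using pmul_nonzero_split by blast
    then show "(v, as) \<in> (\<lambda>(p, q). (fst p, snd p @ snd q)) ` (supp f \<times> supp g)"
      by (intro image_eqI[of _ _ "((v, take k as), (pend t v (take k as), drop k as))"]) auto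
  qed
  show "finite ((\<lambda>(p, q). (fst p, snd p @ snd q)) ` (supp f \<times> supp g))"
    using assms by auto
qed

definition finite_quiver :: "nat set \<Rightarrow> 'e set \<Rightarrow> ('e \<Rightarrow> nat) \<Rightarrow> ('e \<Rightarrow> nat) \<Rightarrow> bool" where
  "finite_quiver V E s t \<longleftrightarrow> finite V \<and> (\<forall>a\<in>E. s a \<in> V \<and> t a \<in> V)"

lemma valid_path_pend:
  "finite_quiver V E s t \<Longrightarrow> valid_path V E s t p \<Longrightarrow> pend t (fst p) (snd p) \<in> V"
  unfolding finite_quiver_def valid_path_def by (subst pend_eq_last) (auto dest!: last_in_set)

lemma valid_path_take:
  "valid_path V E s t (v, as) \<Longrightarrow> valid_path V E s t (v, take k as)"
  unfolding valid_path_def by (metis append_take_drop_id fst_conv snd_conv is_chain_append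
      in_set_takeD subset_code(1))

lemma valid_path_drop:
  assumes "finite_quiver V E s t" "valid_path V E s t (v, as)"
  shows "valid_path V E s t (pend t v (take k as), drop k as)"
proof -
  have "pend t v (take k as) \<in> V"
    using valid_path_pend[OF assms(1) valid_path_take[OF assms(2)]] by simp
  then show ?thesis
    using assms(2) unfolding valid_path_def
    by (metis append_take_drop_id fst_conv snd_conv is_chain_append in_set_dropD subset_code(1))
qed

lemma path_alg_iff: "f \<in> path_alg V E s t \<longleftrightarrow> fin_supp f \<and> (\<forall>p. f p \<noteq> 0 \<longrightarrow> valid_path V E s t p)"
  by (simp add: path_alg_def)

lemma path_alg_valid_path: "f \<in> path_alg V E s t \<Longrightarrow> f p \<noteq> 0 \<Longrightarrow> valid_path V E s t p"
  unfolding path_alg_def by blast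

lemma pth_in_path_alg: "valid_path V E s t p \<Longrightarrow> pth p \<in> path_alg V E s t"
  by (auto simp: path_alg_iff fin_supp_pth pth_def)

lemma zero_in_path_alg: "0 \<in> path_alg V E s t"
  by (auto simp: path_alg_iff)

lemma path_alg_add: "f \<in> path_alg V E s t \<Longrightarrow> g \<in> path_alg V E s t \<Longrightarrow> f + g \<in> path_alg V E s t"
  unfolding path_alg_iff by (intro conjI fin_supp_add allI impI) (auto, metis add_0)

lemma path_alg_diff: "f \<in> path_alg V E s t \<Longrightarrow> g \<in> path_alg V E s t \<Longrightarrow> f - g \<in> path_alg V E s t"
  unfolding path_alg_iff by (intro conjI fin_supp_diff allI impI) (auto, metis diff_self)

lemma path_alg_psmult: "f \<in> path_alg V E s t \<Longrightarrow> psmult c f \<in> path_alg V E s t"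
  by (auto simp: path_alg_iff fin_supp_psmult psmult_def)

lemma lin_subspace_path_alg: "lin_subspace (path_alg V E s t)"
  by (simp add: lin_subspace_def zero_in_path_alg path_alg_add path_alg_psmult)

lemma path_alg_pmul:
  assumes "f \<in> path_alg V E s t" "g \<in> path_alg V E s t"
  shows "pmul t f g \<in> path_alg V E s t"
proof -
  have "valid_path V E s t (v, as)" if nonzero: "pmul t f g (v, as) \<noteq> 0" for v as
  proof -
    obtain k where "f (v, take k as) \<noteq> 0" "g (pend t v (take k as), drop k as) \<noteq> 0"
      using pmul_nonzero_split[OF nonzero] by blast
    then have "valid_path V E s t (v, take k as)"
      "valid_path V E s t (pend t v (take k as), drop k as)"
      using assms by (auto simp: path_alg_iff)
    then show ?thesis unfolding valid_path_def
      by (metis append_take_drop_id is_chain_append fst_conv set_append snd_conv sup.bounded_iff)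
  qed
  then show ?thesis using assms fin_supp_pmul by (auto simp: path_alg_iff)
qed

lemma pone_in_path_alg: "finite_quiver V E s t \<Longrightarrow> pone V \<in> path_alg V E s t"
  unfolding path_alg_iff finite_quiver_def
  by (auto simp: pone_def valid_path_def intro: finite_subset[of _ "(\<lambda>v. (v, [])) ` V"])

lemma pmul_pone_left:
  assumes "f \<in> path_alg V E s t"
  shows "pmul t (pone V) f = f"
proof (rule ext, clarify)
  fix v as
  have "pmul t (pone V) f (v, as) =
      (\<Sum>k\<in>{0..length as}. pone V (v, take k as) * f (pend t v (take k as), drop k as))"
    by (simp add: pmul_def)
  also have "\<dots> = pone V (v, take 0 as) * f (pend t v (take 0 as), drop 0 as)"
    by (subst sum_eq_single[of _ 0]) (auto simp: pone_def)
  also have "\<dots> = f (v, as)"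
    using assms by (auto simp: pone_def path_alg_iff valid_path_def)
  finally show "pmul t (pone V) f (v, as) = f (v, as)" .
qed

lemma pmul_pone_right:
  assumes "finite_quiver V E s t" "f \<in> path_alg V E s t"
  shows "pmul t f (pone V) = f"
proof (rule ext, clarify)
  fix v as
  have "pmul t f (pone V) (v, as) =
      (\<Sum>k\<in>{0..length as}. f (v, take k as) * pone V (pend t v (take k as), drop k as))"
    by (simp add: pmul_def)
  also have "\<dots> = f (v, take (length as) as) * pone V (pend t v (take (length as) as), drop (length as) as)"
    by (subst sum_eq_single[of _ "length as"]) (auto simp: pone_def)
  also have "\<dots> = f (v, as)"
    using assms valid_path_pend[OF assms(1), of "(v, as)"] by (auto simp: pone_def path_alg_iff)
  finally show "pmul t f (pone V) (v, as) = f (v, as)" .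
qed

lemma pone_eq_sum: "finite V \<Longrightarrow> pone V = (\<Sum>v\<in>V. pth (v, []))"
  by (rule ext) (auto simp: sum_fun_apply pth_def pone_def intro!: sum.neutral)

section \<open>Ideals generated by relations\<close>

context
  fixes V :: "nat set" and E :: "'e set" and s t :: "'e \<Rightarrow> nat"
    and R :: "('e path \<Rightarrow> 'k::field) set"
  assumes quiver: "finite_quiver V E s t" and rels: "R \<subseteq> path_alg V E s t"
begin

lemma gen_ideal_subset_path_alg: "x \<in> gen_ideal V E s t R \<Longrightarrow> x \<in> path_alg V E s t"
proof (induction rule: gen_ideal.induct)
  case gi_zero
  then show ?case using zero_in_path_alg by (metis const_zero_eq_zero)
next
  case (gi_gen x)
  then show ?case using rels by auto
next
  case (gi_add x y)
  then show ?case by (metis padd_eq_plus path_alg_add)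
next
  case (gi_mult x a b)
  then show ?case by (simp add: path_alg_pmul)
qed

lemma gen_ideal_zero: "0 \<in> gen_ideal V E s t R"
  using gen_ideal.gi_zero by (metis const_zero_eq_zero)

lemma gen_ideal_add:
  "x \<in> gen_ideal V E s t R \<Longrightarrow> y \<in> gen_ideal V E s t R \<Longrightarrow> x + y \<in> gen_ideal V E s t R"
  using gen_ideal.gi_add by (metis padd_eq_plus)

lemma gen_ideal_mult_left:
  "a \<in> path_alg V E s t \<Longrightarrow> x \<in> gen_ideal V E s t R \<Longrightarrow> pmul t a x \<in> gen_ideal V E s t R"
  using gen_ideal.gi_mult[of x V E s t R a "pone V"] pmul_pone_right[OF quiver] path_alg_pmul
    gen_ideal_subset_path_alg pone_in_path_alg[OF quiver] by metis

lemma gen_ideal_mult_right: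
  "b \<in> path_alg V E s t \<Longrightarrow> x \<in> gen_ideal V E s t R \<Longrightarrow> pmul t x b \<in> gen_ideal V E s t R"
  using gen_ideal.gi_mult[of x V E s t R "pone V" b] pmul_pone_left gen_ideal_subset_path_alg
    pone_in_path_alg[OF quiver] by metis

lemma gen_ideal_psmult: "x \<in> gen_ideal V E s t R \<Longrightarrow> psmult c x \<in> gen_ideal V E s t R"
proof -
  assume x: "x \<in> gen_ideal V E s t R"
  have "pmul t (psmult c (pone V)) x \<in> gen_ideal V E s t R"
    using x by (intro gen_ideal_mult_left path_alg_psmult pone_in_path_alg[OF quiver])
  moreover have "pmul t (psmult c (pone V)) x = psmult c x"
    using gen_ideal_subset_path_alg[OF x] by (simp add: pmul_psmult_left pmul_pone_left)
  ultimately show ?thesis by simp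
qed

lemma lin_subspace_gen_ideal: "lin_subspace (gen_ideal V E s t R)"
  by (simp add: lin_subspace_def gen_ideal_zero gen_ideal_add gen_ideal_psmult)

lemma gen_ideal_diff:
  "x \<in> gen_ideal V E s t R \<Longrightarrow> y \<in> gen_ideal V E s t R \<Longrightarrow> x - y \<in> gen_ideal V E s t R"
  by (rule lin_subspace_diff[OF lin_subspace_gen_ideal])

lemma gen_ideal_uminus: "x \<in> gen_ideal V E s t R \<Longrightarrow> - x \<in> gen_ideal V E s t R"
  by (rule lin_subspace_uminus[OF lin_subspace_gen_ideal])

end

section \<open>Substituting paths for arrows\<close>

abbreviation concat_map :: "('e \<Rightarrow> 'f list) \<Rightarrow> 'e list \<Rightarrow> 'f list" where
  "concat_map \<sigma> as \<equiv> concat (map \<sigma> as)"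

definition path_subst :: "('e \<Rightarrow> 'f list) \<Rightarrow> ('e path \<Rightarrow> 'k::field) \<Rightarrow> ('f path \<Rightarrow> 'k)" where
  "path_subst \<sigma> f = (\<lambda>(w, bs). \<Sum>p\<in>{p. f p \<noteq> 0 \<and> fst p = w \<and> concat_map \<sigma> (snd p) = bs}. f p)"

lemma pmap_eq_path_subst: "pmap \<psi> = path_subst (\<lambda>a. [\<psi> a])"
  by (simp add: fun_eq_iff pmap_def path_subst_def)

lemma path_subst_eq_sum:
  assumes "finite S" "supp f \<subseteq> S"
  shows "path_subst \<sigma> f q = (\<Sum>p\<in>S. if (fst p, concat_map \<sigma> (snd p)) = q then f p else 0)"
proof -
  obtain w bs where q: "q = (w, bs)" by force
  have "{p. f p \<noteq> 0 \<and> fst p = w \<and> concat_map \<sigma> (snd p) = bs} =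
      {p\<in>S. f p \<noteq> 0 \<and> (fst p, concat_map \<sigma> (snd p)) = q}"
    using assms q by auto
  then have "path_subst \<sigma> f q = (\<Sum>p\<in>{p\<in>S. f p \<noteq> 0 \<and> (fst p, concat_map \<sigma> (snd p)) = q}. f p)"
    by (simp add: path_subst_def q)
  also have "\<dots> = (\<Sum>p\<in>S. if f p \<noteq> 0 \<and> (fst p, concat_map \<sigma> (snd p)) = q then f p else 0)"
    using assms by (simp add: sum.inter_filter)
  also have "\<dots> = (\<Sum>p\<in>S. if (fst p, concat_map \<sigma> (snd p)) = q then f p else 0)"
    by (intro sum.cong) auto
  finally show ?thesis .
qed

lemma fs_linear_path_subst: "fs_linear (path_subst \<sigma>)"
proof (rule fs_linearI)
  fix x y :: "'a path \<Rightarrow> 'b" assume xy: "fin_supp x" "fin_supp y"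
  let ?S = "supp x \<union> supp y"
  let ?coeff = "\<lambda>f q. \<Sum>p\<in>?S. if (fst p, concat_map \<sigma> (snd p)) = q then f p else 0"
  have "path_subst \<sigma> (x + y) q = ?coeff x q + ?coeff y q" for q
    using xy by (subst path_subst_eq_sum[of ?S]) (auto simp: sum.distrib[symmetric] intro: sum.cong)
  moreover have "path_subst \<sigma> x q = ?coeff x q" "path_subst \<sigma> y q = ?coeff y q" for q
    using xy by (auto intro: path_subst_eq_sum)
  ultimately show "path_subst \<sigma> (x + y) = path_subst \<sigma> x + path_subst \<sigma> y"
    by (simp add: fun_eq_iff)
next
  fix c and x :: "'a path \<Rightarrow> 'b" assume x: "fin_supp x"
  let ?coeff = "\<lambda>f q. \<Sum>p\<in>supp x. if (fst p, concat_map \<sigma> (snd p)) = q then f p else 0"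
  have "path_subst \<sigma> (psmult c x) q = ?coeff (psmult c x) q" for q
    using x by (intro path_subst_eq_sum) (auto simp: psmult_def)
  moreover have "?coeff (psmult c x) q = c * ?coeff x q" for q
    by (simp add: sum_distrib_left psmult_def, intro sum.cong) (auto simp: psmult_def)
  moreover have "path_subst \<sigma> x q = ?coeff x q" for q
    using x by (intro path_subst_eq_sum) auto
  ultimately show "path_subst \<sigma> (psmult c x) = psmult c (path_subst \<sigma> x)"
    by (simp add: fun_eq_iff psmult_def)
qed

lemma path_subst_pth: "path_subst \<sigma> (pth p :: _ \<Rightarrow> 'k::field) = pth (fst p, concat_map \<sigma> (snd p))"
proof (rule ext)
  fix q
  have "path_subst \<sigma> (pth p :: _ \<Rightarrow> 'k) q =
      (\<Sum>p'\<in>{p}. if (fst p', concat_map \<sigma> (snd p')) = q then (pth p :: _ \<Rightarrow> 'k) p' else 0)"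
    by (intro path_subst_eq_sum) (auto simp: pth_def)
  then show "path_subst \<sigma> (pth p :: _ \<Rightarrow> 'k) q = pth (fst p, concat_map \<sigma> (snd p)) q"
    by (auto simp: pth_def)
qed

lemma path_subst_zero: "path_subst \<sigma> 0 = 0"
  by (rule fs_linear_zero[OF fs_linear_path_subst])

lemma path_subst_pth_diff:
  "path_subst \<sigma> (pth p - pth q) =
   pth (fst p, concat_map \<sigma> (snd p)) - pth (fst q, concat_map \<sigma> (snd q))"
  by (simp add: fs_linear_diff[OF fs_linear_path_subst] fin_supp_pth path_subst_pth)

lemma fin_supp_path_subst:
  assumes "fin_supp f"
  shows "fin_supp (path_subst \<sigma> f)"
proof (rule finite_subset)
  show "supp (path_subst \<sigma> f) \<subseteq> (\<lambda>p. (fst p, concat_map \<sigma> (snd p))) ` supp f"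
  proof
    fix q assume "q \<in> supp (path_subst \<sigma> f)"
    then have "(\<Sum>p\<in>supp f. if (fst p, concat_map \<sigma> (snd p)) = q then f p else 0) \<noteq> 0"
      using assms by (simp add: path_subst_eq_sum[of "supp f"])
    then obtain p where "p \<in> supp f" "(fst p, concat_map \<sigma> (snd p)) = q"
      by (auto elim!: sum.not_neutral_contains_not_neutral split: if_splits)
    then show "q \<in> (\<lambda>p. (fst p, concat_map \<sigma> (snd p))) ` supp f" by force
  qed
qed (use assms in simp)

lemma concat_map_concat_map:
  "concat_map \<sigma> (concat_map \<tau> as) = concat_map (\<lambda>a. concat_map \<sigma> (\<tau> a)) as"
  by (induction as) auto

lemma path_subst_comp:
  "fin_supp x \<Longrightarrow> path_subst \<sigma> (path_subst \<tau> x) = path_subst (\<lambda>a. concat_map \<sigma> (\<tau> a)) x"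
  by (rule fs_linear_eqI[OF fs_linear_comp[OF fs_linear_path_subst fs_linear_path_subst
        fin_supp_path_subst] fs_linear_path_subst])
     (simp_all add: path_subst_pth concat_map_concat_map)

lemma path_subst_id:
  assumes "x \<in> path_alg V E s t" "\<And>a. a \<in> E \<Longrightarrow> \<rho> a = [a]"
  shows "path_subst \<rho> x = x"
proof (rule fs_linear_eqI[OF fs_linear_path_subst fs_linear_id])
  show "fin_supp x" using assms(1) by (simp add: path_alg_iff)
  fix p assume "x p \<noteq> 0"
  then have "set (snd p) \<subseteq> E" using assms(1) unfolding path_alg_def valid_path_def by blast
  moreover have "set as \<subseteq> E \<Longrightarrow> concat_map \<rho> as = as" for as
    using assms(2) by (induction as) auto
  ultimately show "path_subst \<rho> (pth p) = pth p" by (simp add: path_subst_pth)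
qed

lemma path_subst_pone: "finite V \<Longrightarrow> path_subst \<sigma> (pone V :: _ \<Rightarrow> 'k::field) = pone V"
  by (simp add: pone_eq_sum fs_linear_sum[OF fs_linear_path_subst] fin_supp_pth path_subst_pth)

definition quiver_subst ::
  "nat set \<Rightarrow> 'e set \<Rightarrow> ('e \<Rightarrow> nat) \<Rightarrow> ('e \<Rightarrow> nat) \<Rightarrow>
   nat set \<Rightarrow> 'f set \<Rightarrow> ('f \<Rightarrow> nat) \<Rightarrow> ('f \<Rightarrow> nat) \<Rightarrow> ('e \<Rightarrow> 'f list) \<Rightarrow> bool" where
  "quiver_subst V E s t V' E' s' t' \<sigma> \<longleftrightarrow> V \<subseteq> V' \<and>
     (\<forall>a\<in>E. \<sigma> a \<noteq> [] \<and> set (\<sigma> a) \<subseteq> E' \<and> is_chain s' t' (s a) (\<sigma> a) \<and> t' (last (\<sigma> a)) = t a)"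

lemma quiver_subst_pend:
  "quiver_subst V E s t V' E' s' t' \<sigma> \<Longrightarrow> set as \<subseteq> E \<Longrightarrow> pend t' v (concat_map \<sigma> as) = pend t v as"
proof (induction as arbitrary: v)
  case (Cons a as)
  then have "pend t' v (\<sigma> a) = t a" unfolding quiver_subst_def by (subst pend_eq_last) auto
  then show ?case using Cons by simp
qed simp

lemma quiver_subst_is_chain:
  "quiver_subst V E s t V' E' s' t' \<sigma> \<Longrightarrow> set as \<subseteq> E \<Longrightarrow> is_chain s t v as \<Longrightarrow>
   is_chain s' t' v (concat_map \<sigma> as)"
proof (induction as arbitrary: v)
  case (Cons a as)
  then have "pend t' v (\<sigma> a) = t a" unfolding quiver_subst_def by (subst pend_eq_last) auto
  then show ?case using Cons by (auto simp: quiver_subst_def)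
qed simp

lemma quiver_subst_valid_path:
  "quiver_subst V E s t V' E' s' t' \<sigma> \<Longrightarrow> valid_path V E s t p \<Longrightarrow>
   valid_path V' E' s' t' (fst p, concat_map \<sigma> (snd p))"
  unfolding valid_path_def using quiver_subst_is_chain[of V E s t V' E' s' t' \<sigma> "snd p" "fst p"]
  by (auto simp: quiver_subst_def)

lemma quiver_subst_comp:
  assumes \<sigma>: "quiver_subst V E s t V' E' s' t' \<sigma>" and \<tau>: "quiver_subst V' E' s' t' V'' E'' s'' t'' \<tau>"
  shows "quiver_subst V E s t V'' E'' s'' t'' (\<lambda>a. concat_map \<tau> (\<sigma> a))"
  unfolding quiver_subst_def
proof (intro conjI ballI)
  show "V \<subseteq> V''" using \<sigma> \<tau> by (auto simp: quiver_subst_def)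
  fix a assume a: "a \<in> E"
  then have \<sigma>a: "\<sigma> a \<noteq> []" "set (\<sigma> a) \<subseteq> E'" "is_chain s' t' (s a) (\<sigma> a)" "t' (last (\<sigma> a)) = t a"
    using \<sigma> by (auto simp: quiver_subst_def)
  obtain b where b: "b \<in> set (\<sigma> a)" using \<sigma>a(1) by (cases "\<sigma> a") auto
  then have "\<tau> b \<noteq> []" using \<sigma>a \<tau> by (auto simp: quiver_subst_def)
  then show nonempty: "concat_map \<tau> (\<sigma> a) \<noteq> []" using b by auto
  have "t'' (last (concat_map \<tau> (\<sigma> a))) = pend t'' 0 (concat_map \<tau> (\<sigma> a))"
    by (simp only: pend_eq_last[of t'' 0] if_not_P[OF nonempty])
  also have "\<dots> = pend t' 0 (\<sigma> a)" using quiver_subst_pend[OF \<tau> \<sigma>a(2)] .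
  also have "\<dots> = t a" using \<sigma>a by (simp add: pend_eq_last)
  finally show "t'' (last (concat_map \<tau> (\<sigma> a))) = t a" .
  show "set (concat_map \<tau> (\<sigma> a)) \<subseteq> E''" using \<sigma>a \<tau> by (auto simp: quiver_subst_def)
  show "is_chain s'' t'' (s a) (concat_map \<tau> (\<sigma> a))" using quiver_subst_is_chain[OF \<tau> \<sigma>a(2,3)] .
qed

context
  fixes V :: "nat set" and E :: "'e set" and s t :: "'e \<Rightarrow> nat"
    and V' :: "nat set" and E' :: "'f set" and s' t' :: "'f \<Rightarrow> nat"
    and \<sigma> :: "'e \<Rightarrow> 'f list"
  assumes \<sigma>: "quiver_subst V E s t V' E' s' t' \<sigma>"
begin

lemma path_subst_in_path_alg:
  "f \<in> path_alg V E s t \<Longrightarrow> path_subst \<sigma> f \<in> path_alg V' E' s' t'"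
proof (rule fs_linear_mem_subspace[OF fs_linear_path_subst lin_subspace_path_alg])
  assume f: "f \<in> path_alg V E s t"
  then show "fin_supp f" by (simp add: path_alg_iff)
  fix p assume "f p \<noteq> 0"
  then have "valid_path V E s t p" using f by (rule path_alg_valid_path[rotated])
  then show "path_subst \<sigma> (pth p) \<in> path_alg V' E' s' t'"
    unfolding path_subst_pth by (intro pth_in_path_alg quiver_subst_valid_path[OF \<sigma>])
qed

lemma path_subst_pmul:
  assumes x: "x \<in> path_alg V E s t" and y: "y \<in> path_alg V E s t"
  shows "path_subst \<sigma> (pmul t x y) = pmul t' (path_subst \<sigma> x) (path_subst \<sigma> y)"
proof -
  have paths: "path_subst \<sigma> (pmul t (pth p) (pth q)) =
      pmul t' (path_subst \<sigma> (pth p)) (path_subst \<sigma> (pth q) :: _ \<Rightarrow> 'k::field)"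
    if "set (snd p) \<subseteq> E" for p q
    using quiver_subst_pend[OF \<sigma> that] by (simp add: pmul_pth path_subst_pth path_subst_zero)
  have path_left: "path_subst \<sigma> (pmul t (pth p) y) = pmul t' (path_subst \<sigma> (pth p)) (path_subst \<sigma> y)"
    if "set (snd p) \<subseteq> E" for p
  proof (rule fs_linear_eqI[where x = y])
    show "fs_linear (\<lambda>y. path_subst \<sigma> (pmul t (pth p) y))"
      by (rule fs_linear_comp[OF fs_linear_path_subst fs_linear_pmul_right])
         (simp add: fin_supp_pmul fin_supp_pth)
    show "fs_linear (\<lambda>y. pmul t' (path_subst \<sigma> (pth p)) (path_subst \<sigma> y))"
      by (rule fs_linear_comp[OF fs_linear_pmul_right fs_linear_path_subst fin_supp_path_subst])
    show "fin_supp y" using y by (simp add: path_alg_iff)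
  qed (rule paths[OF that])
  show ?thesis
  proof (rule fs_linear_eqI[where x = x])
    show "fs_linear (\<lambda>x. path_subst \<sigma> (pmul t x y))"
      using y by (intro fs_linear_comp[OF fs_linear_path_subst fs_linear_pmul_left])
         (simp add: fin_supp_pmul path_alg_iff)
    show "fs_linear (\<lambda>x. pmul t' (path_subst \<sigma> x) (path_subst \<sigma> y))"
      by (rule fs_linear_comp[OF fs_linear_pmul_left fs_linear_path_subst fin_supp_path_subst])
    show "fin_supp x" using x by (simp add: path_alg_iff)
    show "path_subst \<sigma> (pmul t (pth p) y) = pmul t' (path_subst \<sigma> (pth p)) (path_subst \<sigma> y)"
      if "x p \<noteq> 0" for p
    proof -
      have "valid_path V E s t p" using x that by (rule path_alg_valid_path)
      then show ?thesis by (intro path_left) (simp add: valid_path_def)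
    qed
  qed
qed

lemma path_subst_gen_ideal:
  assumes quiver: "finite_quiver V E s t" and quiver': "finite_quiver V' E' s' t'"
    and rels: "R \<subseteq> path_alg V E s t" and rels': "R' \<subseteq> path_alg V' E' s' t'"
    and rels_to_ideal: "\<And>x. x \<in> R \<Longrightarrow> path_subst \<sigma> x \<in> gen_ideal V' E' s' t' R'"
  shows "x \<in> gen_ideal V E s t R \<Longrightarrow> path_subst \<sigma> x \<in> gen_ideal V' E' s' t' R'"
proof (induction rule: gen_ideal.induct)
  case gi_zero
  then show ?case
    using gen_ideal_zero[OF quiver' rels'] by (simp add: const_zero_eq_zero path_subst_zero)
next
  case (gi_gen x)
  then show ?case by (rule rels_to_ideal)
next
  case (gi_add x y)
  then have "fin_supp x" "fin_supp y"
    using gen_ideal_subset_path_alg[OF quiver rels] by (auto simp: path_alg_iff)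
  then have "path_subst \<sigma> (padd x y) = path_subst \<sigma> x + path_subst \<sigma> y"
    by (simp add: padd_eq_plus fs_linear_add[OF fs_linear_path_subst])
  then show ?case using gi_add.IH gen_ideal_add[OF quiver' rels'] by metis
next
  case (gi_mult x a b)
  then have "path_subst \<sigma> (pmul t (pmul t a x) b) =
      pmul t' (pmul t' (path_subst \<sigma> a) (path_subst \<sigma> x)) (path_subst \<sigma> b)"
    using gen_ideal_subset_path_alg[OF quiver rels] by (simp add: path_subst_pmul path_alg_pmul)
  then show ?case
    using gi_mult by (auto intro: gen_ideal.gi_mult path_subst_in_path_alg)
qed

end

context
  fixes V :: "nat set" and E :: "'e set" and s t :: "'e \<Rightarrow> nat"
    and R :: "('e path \<Rightarrow> 'k::field) set" and \<rho> :: "'e \<Rightarrow> 'e list"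
  assumes quiver: "finite_quiver V E s t" and rels: "R \<subseteq> path_alg V E s t"
    and \<rho>: "quiver_subst V E s t V E s t \<rho>"
    and arrows: "\<And>a. a \<in> E \<Longrightarrow> pth (s a, [a]) - pth (s a, \<rho> a) \<in> gen_ideal V E s t R"
begin

lemma pth_congruent_path_subst:
  "valid_path V E s t (v, as) \<Longrightarrow> pth (v, as) - pth (v, concat_map \<rho> as) \<in> gen_ideal V E s t R"
proof (induction as arbitrary: v)
  case Nil
  then show ?case
    using gen_ideal_zero[OF quiver rels] by (metis concat.simps(1) list.map(1) diff_self)
next
  case (Cons a as)
  let ?I = "gen_ideal V E s t R"
  have a: "a \<in> E" "s a = v" "v \<in> V" and rest: "valid_path V E s t (t a, as)"
    using Cons.prems quiver by (auto simp: valid_path_def finite_quiver_def)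
  have \<rho>a: "valid_path V E s t (v, \<rho> a)" "pend t v (\<rho> a) = t a"
    using \<rho> a by (auto simp: quiver_subst_def valid_path_def pend_eq_last)
  have "pth (v, a # as) - pth (v, concat_map \<rho> (a # as)) =
      pmul t (pth (v, [a]) - pth (v, \<rho> a)) (pth (t a, as))
    + pmul t (pth (v, \<rho> a)) (pth (t a, as) - pth (t a, concat_map \<rho> as))"
    using \<rho>a(2) by (simp add: pmul_diff_left pmul_diff_right pmul_pth)
  also have "\<dots> \<in> ?I"
  proof (rule gen_ideal_add[OF quiver rels])
    show "pmul t (pth (v, [a]) - pth (v, \<rho> a)) (pth (t a, as)) \<in> ?I"
      using arrows[of a] a by (intro gen_ideal_mult_right[OF quiver rels] pth_in_path_alg[OF rest]) auto
    show "pmul t (pth (v, \<rho> a)) (pth (t a, as) - pth (t a, concat_map \<rho> as)) \<in> ?I"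
      by (rule gen_ideal_mult_left[OF quiver rels pth_in_path_alg[OF \<rho>a(1)] Cons.IH[OF rest]])
  qed
  finally show ?case .
qed

lemma path_subst_congruent:
  assumes "y \<in> path_alg V E s t"
  shows "y - path_subst \<rho> y \<in> gen_ideal V E s t R"
proof (rule fs_linear_mem_subspace[OF fs_linear_minus[OF fs_linear_id fs_linear_path_subst]
      lin_subspace_gen_ideal[OF quiver rels]])
  show "fin_supp y" using assms by (simp add: path_alg_iff)
  fix p assume "y p \<noteq> 0"
  then have "valid_path V E s t (fst p, snd p)" using assms by (simp add: path_alg_valid_path)
  then show "pth p - path_subst \<rho> (pth p) \<in> gen_ideal V E s t R"
    using pth_congruent_path_subst[of "fst p" "snd p"] by (simp add: path_subst_pth)
qed

end

section \<open>Derivations determined by their values on arrows\<close>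

lemma path_diff_eq_sum:
  assumes "finite S" "supp f \<subseteq> S"
  shows "path_diff t h \<delta> f q = (\<Sum>p\<in>S. f p * dpath t h \<delta> p q)"
  unfolding path_diff_def using assms by (intro sum.mono_neutral_left) auto

lemma fs_linear_path_diff:
  fixes \<delta> :: "'e \<Rightarrow> ('e path \<Rightarrow> 'k::field)"
  shows "fs_linear (path_diff t h \<delta>)"
proof (rule fs_linearI)
  fix x y :: "'e path \<Rightarrow> 'k" assume xy: "fin_supp x" "fin_supp y"
  let ?S = "supp x \<union> supp y"
  have "path_diff t h \<delta> (x + y) q = (\<Sum>p\<in>?S. (x + y) p * dpath t h \<delta> p q)" for q
    using xy by (intro path_diff_eq_sum) auto
  moreover have "path_diff t h \<delta> x q = (\<Sum>p\<in>?S. x p * dpath t h \<delta> p q)"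
    "path_diff t h \<delta> y q = (\<Sum>p\<in>?S. y p * dpath t h \<delta> p q)" for q
    using xy by (auto intro: path_diff_eq_sum)
  ultimately have "path_diff t h \<delta> (x + y) q = path_diff t h \<delta> x q + path_diff t h \<delta> y q" for q
    by (simp add: sum.distrib[symmetric] algebra_simps)
  then show "path_diff t h \<delta> (x + y) = path_diff t h \<delta> x + path_diff t h \<delta> y"
    by (simp add: fun_eq_iff)
next
  fix c and x :: "'e path \<Rightarrow> 'k" assume x: "fin_supp x"
  have "path_diff t h \<delta> (psmult c x) q = (\<Sum>p\<in>supp x. psmult c x p * dpath t h \<delta> p q)" for q
    using x by (intro path_diff_eq_sum) (auto simp: psmult_def)
  then have "path_diff t h \<delta> (psmult c x) q = c * path_diff t h \<delta> x q" for q
    using x by (simp add: path_diff_eq_sum[of "supp x"] sum_distrib_left psmult_def algebra_simps)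
  then show "path_diff t h \<delta> (psmult c x) = psmult c (path_diff t h \<delta> x)"
    by (simp add: fun_eq_iff psmult_def)
qed

lemma path_diff_pth: "path_diff t h \<delta> (pth p) = dpath t h \<delta> p"
  by (rule ext) (simp add: path_diff_eq_sum[of "{p}"] pth_def)

definition koszul_sign :: "('e \<Rightarrow> int) \<Rightarrow> 'e list \<Rightarrow> 'k::field" where
  "koszul_sign h as = (if even (\<Sum>a\<leftarrow>as. h a) then 1 else -1)"

lemma koszul_sign_map: "(\<And>a. h' (\<psi> a) = h a) \<Longrightarrow> koszul_sign h' (map \<psi> as) = koszul_sign h as"
  by (simp add: koszul_sign_def comp_def)

lemma dpath_eq_sum:
  "dpath t h \<delta> (v, as) = (\<Sum>k<length as. psmult (koszul_sign h (take k as))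
     (pmul t (pmul t (pth (v, take k as)) (\<delta> (as ! k))) (pth (pend t v (take (Suc k) as), drop (Suc k) as))))"
  by (simp add: dpath_def fun_eq_iff sum_fun_apply psmult_def koszul_sign_def)

lemma fin_supp_path_diff:
  assumes "\<And>a. fin_supp (\<delta> a)" "fin_supp f"
  shows "fin_supp (path_diff t h \<delta> f)"
proof -
  have "fin_supp (dpath t h \<delta> (v, as))" for v as
    unfolding dpath_eq_sum by (intro fin_supp_sum fin_supp_psmult fin_supp_pmul fin_supp_pth assms) auto
  moreover have "path_diff t h \<delta> f = (\<Sum>p\<in>supp f. psmult (f p) (dpath t h \<delta> p))"
    using assms(2) by (simp add: fun_eq_iff sum_fun_apply psmult_def path_diff_def)
  ultimately show ?thesis using assms by (simp add: fin_supp_sum fin_supp_psmult split_paired_all)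
qed

lemma path_diff_pth_map:
  assumes "\<And>a. h' (\<psi> a) = h a"
  shows "path_diff t' h' \<delta>' (pth (v, map \<psi> as)) = (\<Sum>k<length as. psmult (koszul_sign h (take k as))
     (pmul t' (pmul t' (pth (v, take k (map \<psi> as))) (\<delta>' (\<psi> (as ! k))))
       (pth (pend t' v (take (Suc k) (map \<psi> as)), drop (Suc k) (map \<psi> as)))))"
  by (simp add: path_diff_pth dpath_eq_sum koszul_sign_map[of h' \<psi> h, OF assms] take_map)

context
  fixes V :: "nat set" and E :: "'e set" and s t :: "'e \<Rightarrow> nat"
    and V' :: "nat set" and E' :: "'f set" and s' t' :: "'f \<Rightarrow> nat"
    and R' :: "('f path \<Rightarrow> 'k::field) set"
    and \<psi> :: "'e \<Rightarrow> 'f" and h :: "'e \<Rightarrow> int" and h' :: "'f \<Rightarrow> int"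
    and \<delta> :: "'e \<Rightarrow> ('e path \<Rightarrow> 'k)" and \<delta>' :: "'f \<Rightarrow> ('f path \<Rightarrow> 'k)"
  assumes quiver: "finite_quiver V E s t" and quiver': "finite_quiver V' E' s' t'"
    and rels': "R' \<subseteq> path_alg V' E' s' t'"
    and verts: "V \<subseteq> V'"
    and arrows: "\<And>a. a \<in> E \<Longrightarrow> \<psi> a \<in> E' \<and> s' (\<psi> a) = s a \<and> t' (\<psi> a) = t a"
    and degree: "\<And>a. h' (\<psi> a) = h a"
    and fin_supp_\<delta>: "\<And>a. fin_supp (\<delta> a)"
    and \<delta>_in_path_alg: "\<And>a. a \<in> E \<Longrightarrow> \<delta> a \<in> path_alg V E s t"
    and \<delta>_congruent: "\<And>a. a \<in> E \<Longrightarrow>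
      \<delta>' (\<psi> a) - path_subst (\<lambda>a. [\<psi> a]) (\<delta> a) \<in> gen_ideal V' E' s' t' R'"
begin

lemma quiver_subst_arrows: "quiver_subst V E s t V' E' s' t' (\<lambda>a. [\<psi> a])"
  using verts arrows by (auto simp: quiver_subst_def)

lemma path_subst_path_diff_pth:
  assumes "valid_path V E s t (v, as)"
  shows "path_subst (\<lambda>a. [\<psi> a]) (path_diff t h \<delta> (pth (v, as))) =
    (\<Sum>k<length as. psmult (koszul_sign h (take k as))
     (pmul t' (pmul t' (pth (v, take k (map \<psi> as))) (path_subst (\<lambda>a. [\<psi> a]) (\<delta> (as ! k))))
       (pth (pend t' v (take (Suc k) (map \<psi> as)), drop (Suc k) (map \<psi> as)))))"
proof -
  let ?\<sigma> = "\<lambda>a. [\<psi> a]"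
  define P where "P k = (pth (v, take k as) :: _ \<Rightarrow> 'k)" for k
  define S where "S k = (pth (pend t v (take (Suc k) as), drop (Suc k) as) :: _ \<Rightarrow> 'k)" for k
  have as: "set as \<subseteq> E" using assms by (simp add: valid_path_def)
  have P_in: "P k \<in> path_alg V E s t" and S_in: "S k \<in> path_alg V E s t" for k
    unfolding P_def S_def using assms
    by (auto intro: pth_in_path_alg valid_path_take valid_path_drop[OF quiver])
  have \<delta>_in: "\<delta> (as ! k) \<in> path_alg V E s t" if "k < length as" for k
    using as that by (intro \<delta>_in_path_alg) auto
  have "pend t' v (map \<psi> (take (Suc k) as)) = pend t v (take (Suc k) as)" for k
    using arrows as by (intro pend_map) (auto dest: in_set_takeD)
  then have "path_subst ?\<sigma> (S k) =
      pth (pend t' v (take (Suc k) (map \<psi> as)), drop (Suc k) (map \<psi> as))" for k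
    by (simp add: S_def path_subst_pth take_map drop_map)
  moreover have "path_subst ?\<sigma> (P k) = pth (v, take k (map \<psi> as))" for k
    by (simp add: P_def path_subst_pth take_map)
  moreover have "path_subst ?\<sigma> (path_diff t h \<delta> (pth (v, as))) =
    (\<Sum>k<length as. psmult (koszul_sign h (take k as))
      (path_subst ?\<sigma> (pmul t (pmul t (P k) (\<delta> (as ! k))) (S k))))"
    unfolding path_diff_pth dpath_eq_sum P_def[symmetric] S_def[symmetric]
    by (simp add: fs_linear_sum[OF fs_linear_path_subst] fs_linear_psmult[OF fs_linear_path_subst]
        fin_supp_psmult fin_supp_pmul fin_supp_pth fin_supp_\<delta> P_def S_def)
  ultimately show ?thesis
    using P_in S_in \<delta>_in
    by (simp add: path_subst_pmul[OF quiver_subst_arrows] path_alg_pmul)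
qed

lemma path_diff_path_subst_pth:
  assumes "valid_path V E s t (v, as)"
  shows "path_diff t' h' \<delta>' (path_subst (\<lambda>a. [\<psi> a]) (pth (v, as))) -
    path_subst (\<lambda>a. [\<psi> a]) (path_diff t h \<delta> (pth (v, as))) \<in> gen_ideal V' E' s' t' R'"
proof -
  let ?\<sigma> = "\<lambda>a. [\<psi> a]" and ?I = "gen_ideal V' E' s' t' R'"
  have image: "valid_path V' E' s' t' (v, map \<psi> as)"
    using quiver_subst_valid_path[OF quiver_subst_arrows assms] by simp
  have "path_diff t' h' \<delta>' (path_subst ?\<sigma> (pth (v, as))) - path_subst ?\<sigma> (path_diff t h \<delta> (pth (v, as))) =
     (\<Sum>k<length as. psmult (koszul_sign h (take k as))
      (pmul t' (pmul t' (pth (v, take k (map \<psi> as))) (\<delta>' (\<psi> (as ! k)) - path_subst ?\<sigma> (\<delta> (as ! k))))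
        (pth (pend t' v (take (Suc k) (map \<psi> as)), drop (Suc k) (map \<psi> as)))))"
    unfolding path_subst_path_diff_pth[OF assms] path_subst_pth
    by (simp add: path_diff_pth_map[of h' \<psi> h, OF degree] sum_subtractf[symmetric] psmult_diff
        pmul_diff_left pmul_diff_right)
  also have "\<dots> \<in> ?I"
    using assms image
    by (intro lin_subspace_sum[OF lin_subspace_gen_ideal[OF quiver' rels']]
        gen_ideal_psmult[OF quiver' rels'] gen_ideal.gi_mult \<delta>_congruent
        pth_in_path_alg valid_path_take valid_path_drop[OF quiver'])
       (auto simp: valid_path_def)
  finally show ?thesis .
qed

lemma path_diff_path_subst:
  assumes "x \<in> path_alg V E s t"
  shows "path_diff t' h' \<delta>' (path_subst (\<lambda>a. [\<psi> a]) x) -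
    path_subst (\<lambda>a. [\<psi> a]) (path_diff t h \<delta> x) \<in> gen_ideal V' E' s' t' R'"
proof -
  have "fs_linear (\<lambda>x. path_diff t' h' \<delta>' (path_subst (\<lambda>a. [\<psi> a]) x) -
      path_subst (\<lambda>a. [\<psi> a]) (path_diff t h \<delta> x))"
    by (intro fs_linear_minus fs_linear_comp[OF fs_linear_path_diff fs_linear_path_subst]
        fs_linear_comp[OF fs_linear_path_subst fs_linear_path_diff] fin_supp_path_subst
        fin_supp_path_diff fin_supp_\<delta>)
  then show ?thesis
  proof (rule fs_linear_mem_subspace[OF _ lin_subspace_gen_ideal[OF quiver' rels']])
    show "fin_supp x" using assms by (simp add: path_alg_iff)
    fix p assume "x p \<noteq> 0"
    moreover obtain v as where "p = (v, as)" by force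
    ultimately show "path_diff t' h' \<delta>' (path_subst (\<lambda>a. [\<psi> a]) (pth p)) -
        path_subst (\<lambda>a. [\<psi> a]) (path_diff t h \<delta> (pth p)) \<in> gen_ideal V' E' s' t' R'"
      using path_diff_path_subst_pth path_alg_valid_path[OF assms] by simp
  qed
qed

end

section \<open>The quivers of A^!_r and of T_1^{\<lambda>,r}\<close>

lemma arrowsA_cases [consumes 1, case_names up down theta]:
  assumes "a \<in> arrowsA r"
  obtains (up) i where "i < r" "a = Edge i (Suc i)"
  | (down) i where "i < r" "a = Edge (Suc i) i"
  | (theta) "a = Theta"
  using assms by (auto simp: arrowsA_def)

lemma arrowsT_cases [consumes 1, case_names crossL crossR dot nail]:
  assumes "a \<in> arrowsT r"
  obtains (crossL) i where "i < r" "a = CrossL (Suc i)"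
  | (crossR) i where "i < r" "a = CrossR (Suc i)"
  | (dot) i where "i \<le> r" "a = Dot i"
  | (nail) "a = Nail"
  using assms unfolding arrowsT_def by (auto, metis Suc_le_eq Suc_pred, metis Suc_le_eq Suc_pred)

lemma Edge_up_in_arrowsA: "i < r \<Longrightarrow> Edge i (Suc i) \<in> arrowsA r"
  by (auto simp: arrowsA_def)

lemma Edge_down_in_arrowsA: "i < r \<Longrightarrow> Edge (Suc i) i \<in> arrowsA r"
  by (auto simp: arrowsA_def)

lemma Theta_in_arrowsA: "Theta \<in> arrowsA r"
  by (auto simp: arrowsA_def)

lemma CrossL_in_arrowsT: "i < r \<Longrightarrow> CrossL (Suc i) \<in> arrowsT r"
  by (auto simp: arrowsT_def)

lemma CrossR_in_arrowsT: "i < r \<Longrightarrow> CrossR (Suc i) \<in> arrowsT r"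
  by (auto simp: arrowsT_def)

lemma Dot_in_arrowsT: "i \<le> r \<Longrightarrow> Dot i \<in> arrowsT r"
  by (auto simp: arrowsT_def)

lemma Nail_in_arrowsT: "Nail \<in> arrowsT r"
  by (auto simp: arrowsT_def)

lemma finite_quiver_A: "finite_quiver (vertsA r) (arrowsA r) srcA tgtA"
  unfolding finite_quiver_def vertsA_def by (auto elim!: arrowsA_cases)

lemma finite_quiver_T: "finite_quiver (vertsT r) (arrowsT r) srcT tgtT"
  unfolding finite_quiver_def vertsT_def by (auto elim!: arrowsT_cases)

lemma assign_arrow:
  "a \<in> arrowsA r \<Longrightarrow> assign a \<in> arrowsT r \<and> srcT (assign a) = srcA a \<and> tgtT (assign a) = tgtA a
     \<and> degT (assign a) = degA a"
  by (auto elim!: arrowsA_cases intro: CrossL_in_arrowsT CrossR_in_arrowsT Nail_in_arrowsT)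

lemma hom_degree_assign: "fst (degT (assign a)) = fst (degA a)"
  by (cases a) auto

lemma quiver_subst_assign:
  "quiver_subst (vertsA r) (arrowsA r) srcA tgtA (vertsT r) (arrowsT r) srcT tgtT (\<lambda>a. [assign a])"
  unfolding quiver_subst_def using assign_arrow[of _ r] by (auto simp: vertsA_def vertsT_def)

text \<open>The dot in position i is the double crossing with the i-th red strand, or with the first
one if i = 0.\<close>

fun assign_back :: "arrT \<Rightarrow> arrA list" where
  "assign_back (CrossL i) = [Edge (i - 1) i]"
| "assign_back (CrossR i) = [Edge i (i - 1)]"
| "assign_back Nail = [Theta]"
| "assign_back (Dot i) = (if i = 0 then [Edge 0 1, Edge 1 0] else [Edge i (i - 1), Edge (i - 1) i])"

lemma quiver_subst_assign_back:
  assumes "1 \<le> r"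
  shows "quiver_subst (vertsT r) (arrowsT r) srcT tgtT (vertsA r) (arrowsA r) srcA tgtA assign_back"
  unfolding quiver_subst_def
proof (intro conjI ballI)
  show "vertsT r \<subseteq> vertsA r" by (simp add: vertsA_def vertsT_def)
  fix a assume "a \<in> arrowsT r"
  then have "assign_back a \<noteq> [] \<and> set (assign_back a) \<subseteq> arrowsA r
      \<and> is_chain srcA tgtA (srcT a) (assign_back a) \<and> tgtA (last (assign_back a)) = tgtT a"
  proof (cases rule: arrowsT_cases)
    case (dot i)
    then show ?thesis
      using assms Edge_up_in_arrowsA[of "i - 1" r] Edge_down_in_arrowsA[of "i - 1" r]
        Edge_up_in_arrowsA[of 0 r] Edge_down_in_arrowsA[of 0 r]
      by (cases i) auto
  qed (auto intro: Edge_up_in_arrowsA Edge_down_in_arrowsA Theta_in_arrowsA)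
  then show "assign_back a \<noteq> []" "set (assign_back a) \<subseteq> arrowsA r"
    "is_chain srcA tgtA (srcT a) (assign_back a)" "tgtA (last (assign_back a)) = tgtT a"
    by auto
qed

lemma assign_back_assign: "a \<in> arrowsA r \<Longrightarrow> assign_back (assign a) = [a]"
  by (cases rule: arrowsA_cases) auto

lemma pmap_assign_in_algT: "x \<in> algA r \<Longrightarrow> pmap assign x \<in> algT r"
  unfolding algA_def algT_def pmap_eq_path_subst by (rule path_subst_in_path_alg[OF quiver_subst_assign])

lemma pmap_assign_psmult_add:
  "x \<in> algA r \<Longrightarrow> y \<in> algA r \<Longrightarrow>
   pmap assign (psmult c x + y) = psmult c (pmap assign x) + pmap assign y"
  unfolding pmap_eq_path_subst algA_def path_alg_iff
  by (simp add: fs_linear_add[OF fs_linear_path_subst] fs_linear_psmult[OF fs_linear_path_subst]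
      fin_supp_psmult)

lemma pmap_assign_pmul:
  "x \<in> algA r \<Longrightarrow> y \<in> algA r \<Longrightarrow>
   pmap assign (pmul tgtA x y) = pmul tgtT (pmap assign x) (pmap assign y)"
  unfolding algA_def pmap_eq_path_subst by (rule path_subst_pmul[OF quiver_subst_assign])

lemma pmap_assign_pone: "pmap assign (pone (vertsA r)) = pone (vertsT r)"
  unfolding pmap_eq_path_subst by (simp add: path_subst_pone vertsA_def vertsT_def)

section \<open>The relations\<close>

lemma mem_set_SucI: "x = f (Suc k) \<Longrightarrow> P (Suc k) \<Longrightarrow> x \<in> {f i | i. P i}"
  by blast

lemma crossR_crossL_in_relsT:
  "k < r \<Longrightarrow> pth (Suc k, [CrossR (Suc k), CrossL (Suc k)]) - pth (Suc k, [Dot (Suc k)]) \<in> relsT r"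
  unfolding relsT_def by (intro UnI1 UnI2 mem_set_SucI) (auto simp: pdiff_eq_minus)

lemma crossL_crossR_in_relsT:
  "k < r \<Longrightarrow> pth (k, [CrossL (Suc k), CrossR (Suc k)]) - pth (k, [Dot k]) \<in> relsT r"
  unfolding relsT_def by (intro UnI1 UnI2 mem_set_SucI) (auto simp: pdiff_eq_minus)

lemma nail_dot_in_relsT: "pth (0, [Nail, Dot 0]) - pth (0, [Dot 0, Nail]) \<in> relsT r"
  unfolding relsT_def pdiff_eq_minus by blast

lemma nail_nail_in_relsT: "pth (0, [Nail, Nail]) \<in> relsT r"
  unfolding relsT_def by blast

lemma relsT_cases [consumes 1, case_names dot_crossL dot_crossR crossR_crossL crossL_crossR
    nail_dot nail_nail]:
  assumes "x \<in> relsT r"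
  obtains (dot_crossL) k where "k < r"
      "x = pth (k, [Dot k, CrossL (Suc k)]) - pth (k, [CrossL (Suc k), Dot (Suc k)])"
  | (dot_crossR) k where "k < r"
      "x = pth (Suc k, [Dot (Suc k), CrossR (Suc k)]) - pth (Suc k, [CrossR (Suc k), Dot k])"
  | (crossR_crossL) k where "k < r"
      "x = pth (Suc k, [CrossR (Suc k), CrossL (Suc k)]) - pth (Suc k, [Dot (Suc k)])"
  | (crossL_crossR) k where "k < r"
      "x = pth (k, [CrossL (Suc k), CrossR (Suc k)]) - pth (k, [Dot k])"
  | (nail_dot) "x = pth (0, [Nail, Dot 0]) - pth (0, [Dot 0, Nail])"
  | (nail_nail) "x = pth (0, [Nail, Nail])"
proof -
  have Suc_pred: "1 \<le> i \<Longrightarrow> i = Suc (i - 1)" for i :: nat by simp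
  from assms consider
    (a) i where "1 \<le> i" "i \<le> r" "x = pth (i-1, [Dot (i-1), CrossL i]) - pth (i-1, [CrossL i, Dot i])"
  | (b) i where "1 \<le> i" "i \<le> r" "x = pth (i, [Dot i, CrossR i]) - pth (i, [CrossR i, Dot (i-1)])"
  | (c) i where "1 \<le> i" "i \<le> r" "x = pth (i, [CrossR i, CrossL i]) - pth (i, [Dot i])"
  | (d) i where "1 \<le> i" "i \<le> r" "x = pth (i-1, [CrossL i, CrossR i]) - pth (i-1, [Dot (i-1)])"
  | (e) "x = pth (0, [Nail, Dot 0]) - pth (0, [Dot 0, Nail])"
  | (f) "x = pth (0, [Nail, Nail])"
    unfolding relsT_def pdiff_eq_minus by blast
  then show ?thesis
  proof cases
    case (a i)
    then show ?thesis using dot_crossL[of "i - 1"] Suc_pred[of i] by auto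
  next
    case (b i)
    then show ?thesis using dot_crossR[of "i - 1"] Suc_pred[of i] by auto
  next
    case (c i)
    then show ?thesis using crossR_crossL[of "i - 1"] Suc_pred[of i] by auto
  next
    case (d i)
    then show ?thesis using crossL_crossR[of "i - 1"] Suc_pred[of i] by auto
  qed (use nail_dot nail_nail in auto)
qed

lemma edge_loop_in_relsA:
  "Suc k < r \<Longrightarrow> pth (Suc k, [Edge (Suc k) k, Edge k (Suc k)])
     - pth (Suc k, [Edge (Suc k) (Suc (Suc k)), Edge (Suc (Suc k)) (Suc k)]) \<in> relsA r"
  unfolding relsA_def by (intro UnI1 mem_set_SucI) (auto simp: pdiff_eq_minus)

lemma theta_loop_in_relsA:
  "pth (0, [Theta, Edge 0 1, Edge 1 0]) - pth (0, [Edge 0 1, Edge 1 0, Theta]) \<in> relsA r"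
  unfolding relsA_def pdiff_eq_minus by blast

lemma theta_theta_in_relsA: "pth (0, [Theta, Theta]) \<in> relsA r"
  unfolding relsA_def by blast

lemma relsA_cases [consumes 1, case_names edge_loop theta_loop theta_theta]:
  assumes "x \<in> relsA r"
  obtains (edge_loop) k where "Suc k < r"
      "x = pth (Suc k, [Edge (Suc k) k, Edge k (Suc k)])
         - pth (Suc k, [Edge (Suc k) (Suc (Suc k)), Edge (Suc (Suc k)) (Suc k)])"
  | (theta_loop) "x = pth (0, [Theta, Edge 0 1, Edge 1 0]) - pth (0, [Edge 0 1, Edge 1 0, Theta])"
  | (theta_theta) "x = pth (0, [Theta, Theta])"
proof -
  from assms consider
    (a) i where "0 < i" "i < r"
      "x = pth (i, [Edge i (i-1), Edge (i-1) i]) - pth (i, [Edge i (i+1), Edge (i+1) i])"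
  | (b) "x = pth (0, [Theta, Edge 0 1, Edge 1 0]) - pth (0, [Edge 0 1, Edge 1 0, Theta])"
  | (c) "x = pth (0, [Theta, Theta])"
    unfolding relsA_def pdiff_eq_minus by blast
  then show ?thesis
  proof cases
    case (a i)
    then obtain k where "i = Suc k" by (cases i) auto
    then show ?thesis using a edge_loop[of k] by auto
  qed (use theta_loop theta_theta in auto)
qed

lemma fin_supp_deltaA: "fin_supp (deltaA a)"
  by (cases a) (auto simp: fin_supp_pth)

context
  fixes r :: nat
  assumes r: "1 \<le> r"
begin

lemma relsA_subset_path_alg: "relsA r \<subseteq> path_alg (vertsA r) (arrowsA r) srcA tgtA"
proof
  fix x :: "_ \<Rightarrow> 'k::field" assume "x \<in> relsA r"
  then show "x \<in> path_alg (vertsA r) (arrowsA r) srcA tgtA"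
    using r Edge_up_in_arrowsA[of 0 r] Edge_down_in_arrowsA[of 0 r]
    by (cases rule: relsA_cases)
       (auto simp: valid_path_def vertsA_def Theta_in_arrowsA
         intro!: path_alg_diff pth_in_path_alg Edge_up_in_arrowsA Edge_down_in_arrowsA)
qed

lemma relsT_subset_path_alg: "relsT r \<subseteq> path_alg (vertsT r) (arrowsT r) srcT tgtT"
proof
  fix x :: "_ \<Rightarrow> 'k::field" assume "x \<in> relsT r"
  then show "x \<in> path_alg (vertsT r) (arrowsT r) srcT tgtT"
    by (cases rule: relsT_cases)
       (auto simp: valid_path_def vertsT_def Nail_in_arrowsT
         intro!: path_alg_diff pth_in_path_alg CrossL_in_arrowsT CrossR_in_arrowsT Dot_in_arrowsT)
qed

lemmas idealT_zero = gen_ideal_zero[OF finite_quiver_T relsT_subset_path_alg, folded idealT_def]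
lemmas idealT_gen = gen_ideal.gi_gen[of _ "relsT r" "vertsT r" "arrowsT r" srcT tgtT, folded idealT_def]
lemmas idealT_add = gen_ideal_add[OF finite_quiver_T relsT_subset_path_alg, folded idealT_def]
lemmas idealT_diff = gen_ideal_diff[OF finite_quiver_T relsT_subset_path_alg, folded idealT_def]
lemmas idealT_uminus = gen_ideal_uminus[OF finite_quiver_T relsT_subset_path_alg, folded idealT_def]
lemmas idealT_mult_left =
  gen_ideal_mult_left[OF finite_quiver_T relsT_subset_path_alg, folded idealT_def algT_def]
lemmas idealT_mult_right =
  gen_ideal_mult_right[OF finite_quiver_T relsT_subset_path_alg, folded idealT_def algT_def]

lemmas idealA_zero = gen_ideal_zero[OF finite_quiver_A relsA_subset_path_alg, folded idealA_def]
lemmas idealA_gen = gen_ideal.gi_gen[of _ "relsA r" "vertsA r" "arrowsA r" srcA tgtA, folded idealA_def]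
lemmas idealA_uminus = gen_ideal_uminus[OF finite_quiver_A relsA_subset_path_alg, folded idealA_def]
lemmas idealA_mult_left =
  gen_ideal_mult_left[OF finite_quiver_A relsA_subset_path_alg, folded idealA_def algA_def]
lemmas idealA_mult_right =
  gen_ideal_mult_right[OF finite_quiver_A relsA_subset_path_alg, folded idealA_def algA_def]

lemma dot_0_congruent_double_crossing:
  "pth (0, [Dot 0]) - pth (0, [CrossL 1, CrossR 1]) \<in> idealT r"
proof -
  have "pth (0, [Dot 0]) - pth (0, [CrossL 1, CrossR 1]) =
      - (pth (0, [CrossL (Suc 0), CrossR (Suc 0)]) - pth (0, [Dot 0]))"
    by simp
  also have "\<dots> \<in> idealT r"
    using r by (intro idealT_uminus idealT_gen crossL_crossR_in_relsT) simp
  finally show ?thesis .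
qed

lemma assign_rels_in_idealT:
  assumes "x \<in> relsA r"
  shows "path_subst (\<lambda>a. [assign a]) x \<in> idealT r"
  using assms
proof (cases rule: relsA_cases)
  case (edge_loop k)
  have "path_subst (\<lambda>a. [assign a]) x =
      (pth (Suc k, [CrossR (Suc k), CrossL (Suc k)]) - pth (Suc k, [Dot (Suc k)]))
    - (pth (Suc k, [CrossL (Suc (Suc k)), CrossR (Suc (Suc k))]) - pth (Suc k, [Dot (Suc k)]))"
    unfolding edge_loop path_subst_pth_diff by simp
  also have "\<dots> \<in> idealT r"
    using edge_loop
    by (intro idealT_diff idealT_gen crossR_crossL_in_relsT crossL_crossR_in_relsT) auto
  finally show ?thesis .
next
  case theta_loop
  let ?dot_cc = "pth (0, [Dot 0]) - pth (0, [CrossL 1, CrossR 1])"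
  have nail: "pth (0, [Nail]) \<in> algT r"
    unfolding algT_def by (rule pth_in_path_alg) (auto simp: valid_path_def vertsT_def Nail_in_arrowsT)
  have "path_subst (\<lambda>a. [assign a]) x =
      (pth (0, [Nail, Dot 0]) - pth (0, [Dot 0, Nail]))
    - pmul tgtT (pth (0, [Nail])) ?dot_cc + pmul tgtT ?dot_cc (pth (0, [Nail]))"
    unfolding theta_loop path_subst_pth_diff by (simp add: pmul_diff_left pmul_diff_right pmul_pth)
  also have "\<dots> \<in> idealT r"
    by (rule idealT_add[OF idealT_diff[OF idealT_gen[OF nail_dot_in_relsT]
          idealT_mult_left[OF nail dot_0_congruent_double_crossing]]
          idealT_mult_right[OF nail dot_0_congruent_double_crossing]])
  finally show ?thesis .
next
  case theta_theta
  then show ?thesis using idealT_gen[OF nail_nail_in_relsT] by (simp add: path_subst_pth)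
qed

text \<open>Under the inverse assignment, sliding a dot through a crossing becomes a multiple of
the relation (i|i-1|i) = (i|i+1|i).\<close>

lemma assign_back_dot_crossL_in_idealA:
  assumes "k < r"
  shows "path_subst assign_back
    (pth (k, [Dot k, CrossL (Suc k)]) - pth (k, [CrossL (Suc k), Dot (Suc k)])) \<in> idealA r"
proof (cases k)
  case 0
  then show ?thesis using idealA_zero by (simp add: path_subst_pth_diff)
next
  case (Suc m)
  have "path_subst assign_back
      (pth (k, [Dot k, CrossL (Suc k)]) - pth (k, [CrossL (Suc k), Dot (Suc k)])) =
      pmul tgtA (pth (Suc m, [Edge (Suc m) m, Edge m (Suc m)])
        - pth (Suc m, [Edge (Suc m) (Suc (Suc m)), Edge (Suc (Suc m)) (Suc m)]))
      (pth (Suc m, [Edge (Suc m) (Suc (Suc m))]))"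
    using Suc by (simp add: path_subst_pth_diff pmul_diff_left pmul_pth)
  also have "\<dots> \<in> idealA r"
    using assms Suc
    by (intro idealA_mult_right idealA_gen edge_loop_in_relsA)
       (auto simp: algA_def valid_path_def vertsA_def intro!: pth_in_path_alg Edge_up_in_arrowsA)
  finally show ?thesis .
qed

lemma assign_back_dot_crossR_in_idealA:
  assumes "k < r"
  shows "path_subst assign_back
    (pth (Suc k, [Dot (Suc k), CrossR (Suc k)]) - pth (Suc k, [CrossR (Suc k), Dot k])) \<in> idealA r"
proof (cases k)
  case 0
  then show ?thesis using idealA_zero by (simp add: path_subst_pth_diff)
next
  case (Suc m)
  have "path_subst assign_back
      (pth (Suc k, [Dot (Suc k), CrossR (Suc k)]) - pth (Suc k, [CrossR (Suc k), Dot k])) =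
      - pmul tgtA (pth (Suc (Suc m), [Edge (Suc (Suc m)) (Suc m)]))
        (pth (Suc m, [Edge (Suc m) m, Edge m (Suc m)])
          - pth (Suc m, [Edge (Suc m) (Suc (Suc m)), Edge (Suc (Suc m)) (Suc m)]))"
    using Suc by (simp add: path_subst_pth_diff pmul_diff_right pmul_pth)
  also have "\<dots> \<in> idealA r"
    using assms Suc
    by (intro idealA_uminus idealA_mult_left idealA_gen edge_loop_in_relsA)
       (auto simp: algA_def valid_path_def vertsA_def intro!: pth_in_path_alg Edge_down_in_arrowsA)
  finally show ?thesis .
qed

lemma assign_back_rels_in_idealA:
  assumes "x \<in> relsT r"
  shows "path_subst assign_back x \<in> idealA r"
  using assms
proof (cases rule: relsT_cases)
  case (dot_crossL k)
  then show ?thesis using assign_back_dot_crossL_in_idealA by metis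
next
  case (dot_crossR k)
  then show ?thesis using assign_back_dot_crossR_in_idealA by metis
next
  case (crossR_crossL k)
  then show ?thesis using idealA_zero by (simp add: path_subst_pth_diff)
next
  case (crossL_crossR k)
  show ?thesis
  proof (cases k)
    case 0
    then show ?thesis using crossL_crossR idealA_zero by (simp add: path_subst_pth_diff)
  next
    case (Suc m)
    have "path_subst assign_back x =
        - (pth (Suc m, [Edge (Suc m) m, Edge m (Suc m)])
          - pth (Suc m, [Edge (Suc m) (Suc (Suc m)), Edge (Suc (Suc m)) (Suc m)]))"
      using crossL_crossR Suc by (simp add: path_subst_pth_diff)
    also have "\<dots> \<in> idealA r"
      using crossL_crossR Suc by (intro idealA_uminus idealA_gen edge_loop_in_relsA) auto
    finally show ?thesis .
  qed
next
  case nail_dot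
  then show ?thesis using idealA_gen[OF theta_loop_in_relsA] by (simp add: path_subst_pth_diff)
next
  case nail_nail
  then show ?thesis using idealA_gen[OF theta_theta_in_relsA] by (simp add: path_subst_pth)
qed

lemma arrowsT_congruent_assign_assign_back:
  assumes "a \<in> arrowsT r"
  shows "pth (srcT a, [a]) - pth (srcT a, concat_map (\<lambda>b. [assign b]) (assign_back a)) \<in> idealT r"
  using assms
proof (cases rule: arrowsT_cases)
  case (dot i)
  show ?thesis
  proof (cases i)
    case 0
    then show ?thesis using dot dot_0_congruent_double_crossing by simp
  next
    case (Suc m)
    have "pth (Suc m, [Dot (Suc m)]) - pth (Suc m, [CrossR (Suc m), CrossL (Suc m)]) =
        - (pth (Suc m, [CrossR (Suc m), CrossL (Suc m)]) - pth (Suc m, [Dot (Suc m)]))"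
      by simp
    also have "\<dots> \<in> idealT r"
      using dot Suc by (intro idealT_uminus idealT_gen crossR_crossL_in_relsT) simp
    finally show ?thesis using dot Suc by simp
  qed
qed (use idealT_zero in auto)

lemma deltaT_assign_congruent:
  assumes "a \<in> arrowsA r"
  shows "deltaT (assign a) - path_subst (\<lambda>b. [assign b]) (deltaA a) \<in> idealT r"
  using assms
proof (cases rule: arrowsA_cases)
  case theta
  then show ?thesis using dot_0_congruent_double_crossing by (simp add: path_subst_pth)
qed (use idealT_zero in \<open>auto simp: const_zero_eq_zero path_subst_zero\<close>)

lemma deltaA_in_path_alg:
  "a \<in> arrowsA r \<Longrightarrow> deltaA a \<in> path_alg (vertsA r) (arrowsA r) srcA tgtA"
  using r Edge_up_in_arrowsA[of 0 r] Edge_down_in_arrowsA[of 0 r]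
  by (cases a) (auto simp: const_zero_eq_zero zero_in_path_alg valid_path_def vertsA_def
      intro!: pth_in_path_alg)

lemma pmap_assign_in_idealT: "x \<in> idealA r \<Longrightarrow> pmap assign x \<in> idealT r"
  unfolding pmap_eq_path_subst idealA_def idealT_def
  by (rule path_subst_gen_ideal[OF quiver_subst_assign finite_quiver_A finite_quiver_T
        relsA_subset_path_alg relsT_subset_path_alg assign_rels_in_idealT[unfolded idealT_def]])

lemma pmap_assign_reflects_ideal:
  assumes x: "x \<in> algA r" and "pmap assign x \<in> idealT r"
  shows "x \<in> idealA r"
proof -
  have "path_subst assign_back (pmap assign x) \<in> idealA r"
    unfolding idealA_def
    by (rule path_subst_gen_ideal[OF quiver_subst_assign_back[OF r] finite_quiver_T finite_quiver_A
          relsT_subset_path_alg relsA_subset_path_alg _ assms(2)[unfolded idealT_def]])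
       (rule assign_back_rels_in_idealA[unfolded idealA_def])
  moreover have "path_subst assign_back (pmap assign x) = x"
  proof -
    have "path_subst assign_back (pmap assign x) = path_subst (\<lambda>a. assign_back (assign a)) x"
      using x by (simp add: pmap_eq_path_subst path_subst_comp algA_def path_alg_iff)
    also have "\<dots> = x"
      using x unfolding algA_def by (rule path_subst_id) (rule assign_back_assign)
    finally show ?thesis .
  qed
  ultimately show ?thesis by simp
qed

lemma pmap_assign_surj_mod_idealT:
  assumes y: "y \<in> algT r"
  shows "\<exists>x\<in>algA r. y - pmap assign x \<in> idealT r"
proof
  show "path_subst assign_back y \<in> algA r"
    using y unfolding algA_def algT_def by (rule path_subst_in_path_alg[OF quiver_subst_assign_back[OF r]])
  have "y - pmap assign (path_subst assign_back y) =
      y - path_subst (\<lambda>a. concat_map (\<lambda>b. [assign b]) (assign_back a)) y"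
    using y by (simp add: pmap_eq_path_subst path_subst_comp algT_def path_alg_iff)
  also have "\<dots> \<in> idealT r"
    using y unfolding idealT_def algT_def
    by (intro path_subst_congruent[OF finite_quiver_T relsT_subset_path_alg
          quiver_subst_comp[OF quiver_subst_assign_back[OF r] quiver_subst_assign]]
          arrowsT_congruent_assign_assign_back[unfolded idealT_def])
  finally show "y - pmap assign (path_subst assign_back y) \<in> idealT r" .
qed

lemma dT_pmap_assign: "x \<in> algA r \<Longrightarrow> dT (pmap assign x) - pmap assign (dA x) \<in> idealT r"
  unfolding pmap_eq_path_subst dT_def dA_def idealT_def algA_def
  by (rule path_diff_path_subst[OF finite_quiver_A finite_quiver_T relsT_subset_path_alg])
     (use assign_arrow fin_supp_deltaA deltaA_in_path_alg deltaT_assign_congruent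
        hom_degree_assign in
       \<open>auto simp: vertsA_def vertsT_def idealT_def prod_eq_iff\<close>)

end

theorem proposition7p2:
  fixes r :: nat
  assumes "r \<ge> 1"
  defines "\<Phi> \<equiv> (pmap assign :: (arrA path \<Rightarrow> 'k::field) \<Rightarrow> (arrT path \<Rightarrow> 'k))"
  shows
    \<comment> \<open>the assignment is a morphism of quivers preserving the (hom, q, lambda)-degree\<close>
    "(\<forall>a\<in>arrowsA r. assign a \<in> arrowsT r \<and> srcT (assign a) = srcA a
        \<and> tgtT (assign a) = tgtA a \<and> degT (assign a) = degA a)
    \<comment> \<open>it induces a unital algebra map kQ_r \<rightarrow> k(diagrams)\<close>
   \<and> (\<forall>x\<in>algA r. \<Phi> x \<in> algT r)
   \<and> (\<forall>x\<in>algA r. \<forall>y\<in>algA r. \<forall>c. \<Phi> (padd (psmult c x) y) = padd (psmult c (\<Phi> x)) (\<Phi> y))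
   \<and> (\<forall>x\<in>algA r. \<forall>y\<in>algA r. \<Phi> (pmul tgtA x y) = pmul tgtT (\<Phi> x) (\<Phi> y))
   \<and> \<Phi> (pone (vertsA r)) = pone (vertsT r)
    \<comment> \<open>which descends to the quotients A^!_r \<rightarrow> T_1^{lambda,r} ...\<close>
   \<and> (\<forall>x\<in>idealA r. \<Phi> x \<in> idealT r)
    \<comment> \<open>... injectively ...\<close>
   \<and> (\<forall>x\<in>algA r. \<Phi> x \<in> idealT r \<longrightarrow> x \<in> idealA r)
    \<comment> \<open>... and surjectively\<close>
   \<and> (\<forall>y\<in>algT r. \<exists>x\<in>algA r. pdiff y (\<Phi> x) \<in> idealT r)
    \<comment> \<open>and intertwines the differentials d and d_1\<close>
   \<and> (\<forall>x\<in>algA r. pdiff (dT (\<Phi> x)) (\<Phi> (dA x)) \<in> idealT r)"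
  unfolding \<Phi>_def padd_eq_plus pdiff_eq_minus
  using assign_arrow pmap_assign_in_algT pmap_assign_psmult_add pmap_assign_pmul pmap_assign_pone
    pmap_assign_in_idealT[OF assms(1)] pmap_assign_reflects_ideal[OF assms(1)]
    pmap_assign_surj_mod_idealT[OF assms(1)] dT_pmap_assign[OF assms(1)]
  by blast

end
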